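(* Let $\mathbf{k}$ be a commutative ring and $n\ge0$. Let $\beta=(\beta_1,\dots,\beta_p)$ and $\gamma=(\gamma_1,\dots,\gamma_p)$ be two compositions of $n$ having the same length $p$. Then, in $F_{n,n}$, \[\mathbf{V}_\beta\,\mathbf{B}_\gamma=\sum_{\substack{\chi\in S_p;\\ \beta_{\chi(i)}=\gamma_i\text{ for each }i}}V^{\operatorname{Set}(\beta)_{\chi(1)}}V^{\operatorname{Set}(\beta)_{\chi(2)}}\cdots V^{\operatorname{Set}(\beta)_{\chi(p)}}.\]
   Context: $S_n$ is the symmetric group on $[n]$, with product $(uw)(i)=u(w(i))$; $\operatorname{Des}(u)=\{i\in[n-1]:u(i)>u(i+1)\}$; for $I\subseteq[n-1]$, $\mathbf{B}_I=\sum_{u\in S_n,\ \operatorname{Des}(u)\subseteq I}u\in\mathbf{k}[S_n]$. For a composition $\alpha=(\alpha_1,\dots,\alpha_p)$ of $n$ (positive integers summing to $n$), $\operatorname{Set}(\alpha)=\{\alpha_1,\alpha_1+\alpha_2,\dots,\alpha_1+\cdots+\alpha_{p-1}\}$, $\mathbf{B}_\alpha:=\mathbf{B}_{\operatorname{Set}(\alpha)}$, $\alpha_{\le i}=\alpha_1+\cdots+\alpha_i$, and the $\alpha$-blocks are $\operatorname{Set}(\alpha)_i=\{\alpha_{\le i-1}+1,\dots,\alpha_{\le i}\}$ for $i\in[p]$. $F_n$ is the free associative $\mathbf{k}$-algebra on letters $\underline1,\dots,\underline n$ (linear span of words over $[n]$, multiplication = concatenation), and $F_{n,k}$ is its span of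 words of length $k$. $S_k$ acts on $F_{n,k}$ from the right by $(\underline{w_1}\cdots\underline{w_k})\cdot\sigma=\underline{w_{\sigma(1)}}\cdots\underline{w_{\sigma(k)}}$, extended linearly to a right $\mathbf{k}[S_k]$-action. For $a,b\in F_n$, $[a,b]=ab-ba$. For nonempty $S\subseteq[n]$ with elements $s_1<\cdots<s_k$, $V^S=[[\cdots[[\underline{s_1},\underline{s_2}],\underline{s_3}],\dots],\underline{s_k}]$ ($=\underline{s_1}$ if $k=1$). For a composition $\alpha$ with $p$ parts, $\mathbf{V}_\alpha=V^{\operatorname{Set}(\alpha)_1}V^{\operatorname{Set}(\alpha)_2}\cdots V^{\operatorname{Set}(\alpha)_p}\in F_{n,n}$, and $\mathbf{V}_\beta\mathbf{B}_\gamma$ denotes the right action of $\mathbf{B}_\gamma\in\mathbf{k}[S_n]$ on $\mathbf{V}_\beta$. *)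

theory Defs
  imports "HOL-Combinatorics.Permutations" "HOL-Library.Function_Algebras"
begin

text \<open>Elements of the free algebra F_n over a commutative ring 'k are represented by
their coefficient functions on words (lists of letters, letters are naturals in [n]).\<close>

type_synonym 'k fa = "nat list \<Rightarrow> 'k"

definition fone :: "'k::comm_ring_1 fa" where
  "fone = (\<lambda>w. if w = [] then 1 else 0)"

definition letter :: "nat \<Rightarrow> 'k::comm_ring_1 fa" where
  "letter i = (\<lambda>w. if w = [i] then 1 else 0)"

definition fmul :: "'k::comm_ring_1 fa \<Rightarrow> 'k fa \<Rightarrow> 'k fa" where
  "fmul a b = (\<lambda>w. \<Sum>i\<in>{0..length w}. a (take i w) * b (drop i w))"

definition fprod :: "'k::comm_ring_1 fa list \<Rightarrow> 'k fa" where
  "fprod xs = foldr fmul xs fone"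

definition comm :: "'k::comm_ring_1 fa \<Rightarrow> 'k fa \<Rightarrow> 'k fa" where
  "comm a b = (\<lambda>w. fmul a b w - fmul b a w)"

definition Vset :: "nat set \<Rightarrow> 'k::comm_ring_1 fa" where
  "Vset S = (case sorted_list_of_set S of
               [] \<Rightarrow> (\<lambda>_. 0)
             | s # ss \<Rightarrow> foldl (\<lambda>acc x. comm acc (letter x)) (letter s) ss)"

definition composition :: "nat \<Rightarrow> nat list \<Rightarrow> bool" where
  "composition n \<alpha> \<longleftrightarrow> (\<forall>a\<in>set \<alpha>. 0 < a) \<and> sum_list \<alpha> = n"

definition SetC :: "nat list \<Rightarrow> nat set" where
  "SetC \<alpha> = {sum_list (take i \<alpha>) | i. 1 \<le> i \<and> i \<le> length \<alpha> - 1}"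

text \<open>The i-th alpha-block (1-indexed).\<close>
definition block :: "nat list \<Rightarrow> nat \<Rightarrow> nat set" where
  "block \<alpha> i = {sum_list (take (i - 1) \<alpha>) + 1 .. sum_list (take i \<alpha>)}"

definition Vcomp :: "nat list \<Rightarrow> 'k::comm_ring_1 fa" where
  "Vcomp \<alpha> = fprod (map (\<lambda>i. Vset (block \<alpha> i)) [1..<length \<alpha> + 1])"

definition Des :: "nat \<Rightarrow> (nat \<Rightarrow> nat) \<Rightarrow> nat set" where
  "Des n u = {i \<in> {1..n - 1}. u i > u (i + 1)}"

definition act :: "nat list \<Rightarrow> (nat \<Rightarrow> nat) \<Rightarrow> nat list" where
  "act w s = map (\<lambda>j. w ! (s j - 1)) [1..<length w + 1]"

definition ract :: "nat \<Rightarrow> 'k::comm_ring_1 fa \<Rightarrow> (nat \<Rightarrow> nat) \<Rightarrow> 'k fa" where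
  "ract n f s = (\<lambda>w'. \<Sum>w\<in>{w. length w = length w' \<and> set w \<subseteq> {1..n}}.
                         if act w s = w' then f w else 0)"

definition ractB :: "nat \<Rightarrow> 'k::comm_ring_1 fa \<Rightarrow> nat set \<Rightarrow> 'k fa" where
  "ractB n f I = (\<Sum>u\<in>{u. u permutes {1..n} \<and> Des n u \<subseteq> I}. ract n f u)"

end

theory Submission
  imports Defs
begin

text \<open>Evaluate both sides at a word w of length n and cut w into its \<gamma>-chunks
w_1, ..., w_p. The inverses of the permutations with descents in Set(\<gamma>) are exactly the
permutations that keep the letters of each chunk in order, so acting by B_\<gamma> and then
evaluating at w pairs V_\<beta> with the shuffle product of w_1, ..., w_p. This pairing is
multiplicative for concatenation (the shuffle coproduct is an algebra map), and every factor
V^S of V_\<beta> is a Lie element, hence primitive: its pairing with a shuffle of two or more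
nonempty words vanishes. Pairing the product of the p factors with the shuffle of the p
nonempty chunks therefore puts each factor onto a chunk of its own, leaving a sum over
permutations \<tau> of the products of the values V^{Set(\<beta>)_\<tau>(m)}(w_m). By homogeneity only
the \<tau> with \<beta>_\<tau>(m) = \<gamma>_m contribute, and those terms are the right-hand side at w.\<close>

section \<open>Homogeneous elements and their letters\<close>

lemma sum_fun_apply: "(\<Sum>u\<in>A. (f u :: 'a \<Rightarrow> 'b::comm_monoid_add)) w = (\<Sum>u\<in>A. f u w)"
  by (induction A rule: infinite_finite_induct) auto

definition homogeneous :: "nat \<Rightarrow> 'k::comm_ring_1 fa \<Rightarrow> bool" where
  "homogeneous d f \<longleftrightarrow> (\<forall>w. f w \<noteq> 0 \<longrightarrow> length w = d)"

definition letters_in :: "nat set \<Rightarrow> 'k::comm_ring_1 fa \<Rightarrow> bool" where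
  "letters_in A f \<longleftrightarrow> (\<forall>w. f w \<noteq> 0 \<longrightarrow> set w \<subseteq> A)"

lemma homogeneousD: "homogeneous d f \<Longrightarrow> length w \<noteq> d \<Longrightarrow> f w = 0"
  unfolding homogeneous_def by auto

lemma letters_inD: "letters_in A f \<Longrightarrow> \<not> set w \<subseteq> A \<Longrightarrow> f w = 0"
  unfolding letters_in_def by auto

lemma fa_eqI:
  assumes "homogeneous d f" "homogeneous d g" "letters_in A f" "letters_in A g"
    and "\<And>w. length w = d \<Longrightarrow> set w \<subseteq> A \<Longrightarrow> f w = g w"
  shows "f = g"
proof
  fix w
  show "f w = g w"
  proof (cases "length w = d \<and> set w \<subseteq> A")
    case False
    then show ?thesis using assms(1-4) homogeneousD letters_inD by metis
  qed (use assms(5) in auto)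
qed

lemma homogeneous_sum:
  "(\<And>u. u \<in> A \<Longrightarrow> homogeneous d (f u)) \<Longrightarrow> homogeneous d (\<Sum>u\<in>A. f u)"
  unfolding homogeneous_def sum_fun_apply by (metis (mono_tags, lifting) sum.neutral)

lemma letters_in_sum:
  "(\<And>u. u \<in> A \<Longrightarrow> letters_in B (f u)) \<Longrightarrow> letters_in B (\<Sum>u\<in>A. f u)"
  unfolding letters_in_def sum_fun_apply by (metis (mono_tags, lifting) sum.neutral)

lemma letters_in_mono: "letters_in S f \<Longrightarrow> S \<subseteq> A \<Longrightarrow> letters_in A f"
  unfolding letters_in_def by blast

lemma homogeneous_fone: "homogeneous 0 fone"
  unfolding homogeneous_def fone_def by auto

lemma homogeneous_letter: "homogeneous 1 (letter a)"
  unfolding homogeneous_def letter_def by auto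

lemma fmul_homogeneous_left:
  assumes "homogeneous d a" "d \<le> length w"
  shows "fmul a b w = a (take d w) * b (drop d w)"
proof -
  have "fmul a b w = (\<Sum>i\<in>{d}. a (take i w) * b (drop i w))"
    unfolding fmul_def
    by (rule sum.mono_neutral_right) (use assms in \<open>auto simp: homogeneousD\<close>)
  then show ?thesis by simp
qed

lemma fmul_homogeneous_left_eq_0:
  assumes "homogeneous d a" "length w < d"
  shows "fmul a b w = 0"
  unfolding fmul_def
  by (rule sum.neutral) (use assms in \<open>auto simp: homogeneousD\<close>)

lemma homogeneous_fmul:
  assumes ha: "homogeneous d a" and hb: "homogeneous e b"
  shows "homogeneous (d + e) (fmul a b)"
  unfolding homogeneous_def
proof (intro allI impI)
  fix w assume ne: "fmul a b w \<noteq> 0"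
  then have dl: "d \<le> length w"
    using fmul_homogeneous_left_eq_0[OF ha] by (meson not_le)
  then have "b (drop d w) \<noteq> 0" using ne fmul_homogeneous_left[OF ha dl] by auto
  then have "length (drop d w) = e" using hb unfolding homogeneous_def by blast
  then show "length w = d + e" using dl by simp
qed

lemma homogeneous_comm:
  assumes "homogeneous d a" "homogeneous e b"
  shows "homogeneous (d + e) (comm a b)"
proof -
  have "homogeneous (d + e) (fmul a b)" "homogeneous (d + e) (fmul b a)"
    using homogeneous_fmul[OF assms] homogeneous_fmul[OF assms(2,1)] by (simp_all add: add.commute)
  then show ?thesis unfolding homogeneous_def comm_def by force
qed

lemma letters_in_fone: "letters_in A fone"
  unfolding letters_in_def fone_def by auto

lemma letters_in_letter: "a \<in> A \<Longrightarrow> letters_in A (letter a)"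
  unfolding letters_in_def letter_def by auto

lemma letters_in_fmul:
  assumes ha: "letters_in A a" and hb: "letters_in A b"
  shows "letters_in A (fmul a b)"
  unfolding letters_in_def
proof (intro allI impI)
  fix w assume "fmul a b w \<noteq> 0"
  then obtain i where "a (take i w) * b (drop i w) \<noteq> 0"
    unfolding fmul_def using sum.not_neutral_contains_not_neutral by blast
  then have "set (take i w) \<subseteq> A" "set (drop i w) \<subseteq> A"
    using ha hb unfolding letters_in_def by (metis mult_not_zero)+
  then show "set w \<subseteq> A" by (metis append_take_drop_id set_append Un_subset_iff)
qed

lemma letters_in_comm:
  assumes "letters_in A a" "letters_in A b"
  shows "letters_in A (comm a b)"
  using letters_in_fmul[OF assms] letters_in_fmul[OF assms(2,1)]
  unfolding letters_in_def comm_def by force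

lemma fmul_fone_right: "fmul a fone = a"
proof
  fix w
  have "fmul a fone w = (\<Sum>i\<in>{length w}. a (take i w) * fone (drop i w))"
    unfolding fmul_def
    by (rule sum.mono_neutral_right) (auto simp: fone_def)
  then show "fmul a fone w = a w" by (simp add: fone_def)
qed

lemma fmul_Nil: "fmul a b [] = a [] * b []"
  by (simp add: fmul_def)

lemma fprod_Cons: "fprod (P # Ps) = fmul P (fprod Ps)"
  by (simp add: fprod_def)

lemma fprod_Nil: "fprod [] = fone"
  by (simp add: fprod_def)

lemma homogeneous_fprod:
  assumes "length ds = length as" "\<forall>k<length as. homogeneous (ds!k) (as!k)"
  shows "homogeneous (sum_list ds) (fprod as)"
  using assms
proof (induction as arbitrary: ds)
  case Nil then show ?case by (simp add: fprod_Nil homogeneous_fone)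
next
  case (Cons a as)
  obtain d ds' where ds: "ds = d # ds'" using Cons.prems(1) by (cases ds) auto
  have "homogeneous d a" using Cons.prems(2) ds by force
  moreover have "homogeneous (sum_list ds') (fprod as)"
    using Cons.prems ds by (intro Cons.IH) force+
  ultimately show ?case by (simp add: ds fprod_Cons homogeneous_fmul)
qed

lemma letters_in_fprod:
  assumes "\<forall>a\<in>set as. letters_in A a"
  shows "letters_in A (fprod as)"
  using assms by (induction as) (auto simp: fprod_Nil fprod_Cons letters_in_fone letters_in_fmul)

section \<open>Pairing with a shuffle product of several words\<close>

text \<open>A shuffle of the words \<open>xs\<close> is described by its code \<open>cs\<close>, a word over \<open>{..<length xs}\<close>
containing \<open>k\<close> exactly \<open>length (xs!k)\<close> times: its \<open>j\<close>-th letter is taken from word \<open>cs!j\<close>.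
So \<open>shuffle_pairing f xs\<close> is the pairing of \<open>f\<close> with the shuffle product of the \<open>xs\<close>.\<close>

definition interleave :: "nat list \<Rightarrow> 'a list list \<Rightarrow> 'a list" where
  "interleave cs xs = map (\<lambda>j. xs!(cs!j)!(count_list (take j cs) (cs!j))) [0..<length cs]"

definition shuffle_codes :: "'a list list \<Rightarrow> nat list set" where
  "shuffle_codes xs =
     {cs. set cs \<subseteq> {..<length xs} \<and> (\<forall>k<length xs. count_list cs k = length (xs!k))}"

definition shuffle_pairing :: "'k::comm_ring_1 fa \<Rightarrow> nat list list \<Rightarrow> 'k" where
  "shuffle_pairing f xs = (\<Sum>cs\<in>shuffle_codes xs. f (interleave cs xs))"

definition splits :: "'a list list \<Rightarrow> nat list set" where
  "splits xs = {ns. length ns = length xs \<and> (\<forall>k<length xs. ns!k \<le> length (xs!k))}"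

definition take_each :: "nat list \<Rightarrow> 'a list list \<Rightarrow> 'a list list" where
  "take_each ns xs = map (\<lambda>k. take (ns!k) (xs!k)) [0..<length xs]"

definition drop_each :: "nat list \<Rightarrow> 'a list list \<Rightarrow> 'a list list" where
  "drop_each ns xs = map (\<lambda>k. drop (ns!k) (xs!k)) [0..<length xs]"

definition code_counts :: "nat list \<Rightarrow> nat \<Rightarrow> nat list" where
  "code_counts c p = map (count_list c) [0..<p]"

lemma length_interleave[simp]: "length (interleave cs xs) = length cs"
  by (simp add: interleave_def)

lemma nth_interleave:
  "j < length cs \<Longrightarrow> interleave cs xs ! j = xs!(cs!j)!(count_list (take j cs) (cs!j))"
  by (simp add: interleave_def)

lemma length_take_each[simp]: "length (take_each ns xs) = length xs"
  by (simp add: take_each_def)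

lemma length_drop_each[simp]: "length (drop_each ns xs) = length xs"
  by (simp add: drop_each_def)

lemma nth_take_each[simp]: "k < length xs \<Longrightarrow> take_each ns xs ! k = take (ns!k) (xs!k)"
  by (simp add: take_each_def)

lemma nth_drop_each[simp]: "k < length xs \<Longrightarrow> drop_each ns xs ! k = drop (ns!k) (xs!k)"
  by (simp add: drop_each_def)

lemma length_code_counts[simp]: "length (code_counts c p) = p"
  by (simp add: code_counts_def)

lemma nth_code_counts[simp]: "k < p \<Longrightarrow> code_counts c p ! k = count_list c k"
  by (simp add: code_counts_def)

lemma count_take_le: "count_list (take i cs) k \<le> count_list cs k"
  by (metis append_take_drop_id count_list_append le_add1)

lemma count_list_take_strict_mono:
  assumes "j < j'" "j < length cs" "cs ! j = c"
  shows "count_list (take j cs) c < count_list (take j' cs) c"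
proof -
  have "count_list (take j cs) c < count_list (take (Suc j) cs) c"
    using assms by (simp add: take_Suc_conv_app_nth)
  also have "take (Suc j) cs = take (Suc j) (take j' cs)" using assms by (simp add: min_def)
  also have "count_list \<dots> c \<le> count_list (take j' cs) c" by (rule count_take_le)
  finally show ?thesis .
qed

lemma count_list_replicate: "count_list (replicate m a) b = (if a = b then m else 0)"
  by (induction m) auto

lemma length_shuffle_code:
  assumes "cs \<in> shuffle_codes xs"
  shows "length cs = (\<Sum>k<length xs. length (xs!k))"
proof -
  have "set cs \<subseteq> {..<length xs}" using assms by (simp add: shuffle_codes_def)
  then have "length cs = sum (count_list cs) {..<length xs}"
    using sum_count_set by (metis finite_lessThan)
  also have "\<dots> = (\<Sum>k<length xs. length (xs!k))"
    using assms by (intro sum.cong) (simp_all add: shuffle_codes_def)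
  finally show ?thesis .
qed

lemma finite_shuffle_codes: "finite (shuffle_codes xs)"
proof (rule finite_subset)
  show "shuffle_codes xs \<subseteq>
      {cs. set cs \<subseteq> {..<length xs} \<and> length cs = (\<Sum>k<length xs. length (xs!k))}"
    using length_shuffle_code by (auto simp: shuffle_codes_def)
  show "finite \<dots>" by (rule finite_lists_length_eq) simp
qed

lemma finite_splits: "finite (splits xs)"
proof (rule finite_subset)
  let ?N = "\<Sum>k<length xs. length (xs!k)"
  show "splits xs \<subseteq> {ns. set ns \<subseteq> {..?N} \<and> length ns = length xs}"
  proof
    fix ns assume ns: "ns \<in> splits xs"
    have "x \<le> ?N" if "x \<in> set ns" for x
    proof -
      obtain k where k: "k < length ns" "ns!k = x" using \<open>x \<in> set ns\<close> by (auto simp: in_set_conv_nth)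
      then have "x \<le> length (xs!k)" "k < length xs" using ns by (auto simp: splits_def)
      moreover have "length (xs!k) \<le> ?N"
        using \<open>k < length xs\<close> by (intro member_le_sum) auto
      ultimately show ?thesis by simp
    qed
    then show "ns \<in> {ns. set ns \<subseteq> {..?N} \<and> length ns = length xs}"
      using ns by (auto simp: splits_def)
  qed
  show "finite \<dots>" by (rule finite_lists_length_eq) simp
qed

lemma take_interleave:
  assumes "i \<le> length cs"
  shows "take i (interleave cs xs) = interleave (take i cs) xs"
proof (rule nth_equalityI)
  fix j assume "j < length (take i (interleave cs xs))"
  then have j: "j < i" "j < length cs" using assms by auto
  then show "take i (interleave cs xs) ! j = interleave (take i cs) xs ! j"
    by (simp add: nth_interleave min_def)
qed (use assms in simp)

lemma drop_interleave:
  assumes "cs \<in> shuffle_codes xs"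
  shows "drop i (interleave cs xs) =
    interleave (drop i cs) (drop_each (code_counts (take i cs) (length xs)) xs)"
proof (rule nth_equalityI)
  fix j assume "j < length (drop i (interleave cs xs))"
  then have j: "i + j < length cs" by simp
  define c where "c = cs ! (i + j)"
  have cp: "c < length xs" using assms nth_mem[OF j] by (auto simp: shuffle_codes_def c_def)
  have le: "count_list (take i cs) c \<le> length (xs!c)"
    using assms cp count_take_le[of i cs c] by (auto simp: shuffle_codes_def)
  have "drop i (interleave cs xs) ! j = xs!c!(count_list (take (i+j) cs) c)"
    using j by (simp add: nth_interleave c_def)
  also have "\<dots> = xs!c!(count_list (take i cs) c + count_list (take j (drop i cs)) c)"
    by (simp add: take_add)
  also have "\<dots> = interleave (drop i cs) (drop_each (code_counts (take i cs) (length xs)) xs) ! j"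
    using j cp le by (simp add: nth_interleave c_def)
  finally show "drop i (interleave cs xs) ! j =
      interleave (drop i cs) (drop_each (code_counts (take i cs) (length xs)) xs) ! j" .
qed simp

lemma interleave_take_each:
  assumes "c \<in> shuffle_codes (take_each ns xs)"
  shows "interleave c (take_each ns xs) = interleave c xs"
proof (rule nth_equalityI)
  fix j assume "j < length (interleave c (take_each ns xs))"
  then have j: "j < length c" by simp
  define k where "k = c ! j"
  have kp: "k < length xs" using assms nth_mem[OF j] by (auto simp: shuffle_codes_def k_def)
  have "count_list (take j c) k < count_list (take (Suc j) c) k"
    using j by (simp add: take_Suc_conv_app_nth k_def)
  also have "\<dots> \<le> count_list c k" by (rule count_take_le)
  also have "\<dots> = length (take (ns!k) (xs!k))" using assms kp by (auto simp: shuffle_codes_def)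
  finally have "count_list (take j c) k < ns ! k" by simp
  then show "interleave c (take_each ns xs) ! j = interleave c xs ! j"
    using j kp by (simp add: nth_interleave k_def)
qed simp

lemma code_counts_take_each:
  assumes "c1 \<in> shuffle_codes (take_each ns xs)" "ns \<in> splits xs"
  shows "code_counts c1 (length xs) = ns"
  by (rule nth_equalityI) (use assms in \<open>auto simp: shuffle_codes_def splits_def\<close>)

lemma append_in_shuffle_codes:
  assumes ns: "ns \<in> splits xs" and c1: "c1 \<in> shuffle_codes (take_each ns xs)"
    and c2: "c2 \<in> shuffle_codes (drop_each ns xs)"
  shows "c1 @ c2 \<in> shuffle_codes xs"
  unfolding shuffle_codes_def
proof (intro CollectI conjI allI impI)
  show "set (c1 @ c2) \<subseteq> {..<length xs}" using c1 c2 by (auto simp: shuffle_codes_def)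
  fix k assume k: "k < length xs"
  have "count_list (c1 @ c2) k = length (take (ns!k) (xs!k)) + length (drop (ns!k) (xs!k))"
    using c1 c2 k by (simp add: shuffle_codes_def)
  also have "\<dots> = length (xs!k)" using ns k by (simp add: splits_def)
  finally show "count_list (c1 @ c2) k = length (xs ! k)" .
qed

lemma code_counts_take_in_splits:
  assumes "cs \<in> shuffle_codes xs"
  shows "code_counts (take i cs) (length xs) \<in> splits xs"
  unfolding splits_def
proof (intro CollectI conjI allI impI)
  fix k assume k: "k < length xs"
  have "count_list (take i cs) k \<le> count_list cs k" by (rule count_take_le)
  also have "\<dots> = length (xs!k)" using assms k by (simp add: shuffle_codes_def)
  finally show "code_counts (take i cs) (length xs) ! k \<le> length (xs ! k)" using k by simp
qed simp

lemma take_in_shuffle_codes: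
  assumes "cs \<in> shuffle_codes xs"
  shows "take i cs \<in> shuffle_codes (take_each (code_counts (take i cs) (length xs)) xs)"
  unfolding shuffle_codes_def
proof (intro CollectI conjI allI impI)
  show "set (take i cs) \<subseteq> {..<length (take_each (code_counts (take i cs) (length xs)) xs)}"
    using assms set_take_subset[of i cs] by (auto simp: shuffle_codes_def)
  fix k assume "k < length (take_each (code_counts (take i cs) (length xs)) xs)"
  then have k: "k < length xs" by simp
  have "count_list (take i cs) k \<le> count_list cs k" by (rule count_take_le)
  also have "\<dots> = length (xs!k)" using assms k by (simp add: shuffle_codes_def)
  finally show "count_list (take i cs) k =
      length (take_each (code_counts (take i cs) (length xs)) xs ! k)"
    using k by simp
qed

lemma drop_in_shuffle_codes:
  assumes "cs \<in> shuffle_codes xs"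
  shows "drop i cs \<in> shuffle_codes (drop_each (code_counts (take i cs) (length xs)) xs)"
  unfolding shuffle_codes_def
proof (intro CollectI conjI allI impI)
  show "set (drop i cs) \<subseteq> {..<length (drop_each (code_counts (take i cs) (length xs)) xs)}"
    using assms set_drop_subset[of i cs] by (auto simp: shuffle_codes_def)
  fix k assume "k < length (drop_each (code_counts (take i cs) (length xs)) xs)"
  then have k: "k < length xs" by simp
  have "count_list cs k = count_list (take i cs) k + count_list (drop i cs) k"
    by (metis append_take_drop_id count_list_append)
  moreover have "count_list cs k = length (xs!k)" using assms k by (simp add: shuffle_codes_def)
  ultimately show "count_list (drop i cs) k =
      length (drop_each (code_counts (take i cs) (length xs)) xs ! k)"
    using k by simp
qed

text \<open>Cutting a shuffle of the \<open>xs\<close> after \<open>i\<close> letters leaves a shuffle of prefixes of the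
\<open>xs\<close> followed by a shuffle of the complementary suffixes; this bijection makes the pairing
multiplicative.\<close>

lemma shuffle_pairing_fmul:
  "shuffle_pairing (fmul a b) xs =
     (\<Sum>ns\<in>splits xs. shuffle_pairing a (take_each ns xs) * shuffle_pairing b (drop_each ns xs))"
proof -
  define p where "p = length xs"
  define T where "T = (SIGMA cs:shuffle_codes xs. {0..length cs})"
  define S where "S = (SIGMA ns:splits xs. shuffle_codes (take_each ns xs) \<times> shuffle_codes (drop_each ns xs))"
  define h where "h = (\<lambda>(cs, i). a (take i (interleave cs xs)) * b (drop i (interleave cs xs)))"
  define g where
    "g = (\<lambda>(ns, c1, c2). a (interleave c1 (take_each ns xs)) * b (interleave c2 (drop_each ns xs)))"
  have "shuffle_pairing (fmul a b) xs = sum h T"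
    unfolding shuffle_pairing_def fmul_def T_def h_def
    by (simp add: sum.Sigma finite_shuffle_codes split_def)
  also have "\<dots> = sum g S"
  proof (rule sum.reindex_bij_witness[where i = "\<lambda>(ns, c1, c2). (c1 @ c2, length c1)"
        and j = "\<lambda>(cs, i). (code_counts (take i cs) p, take i cs, drop i cs)"])
    fix t assume "t \<in> S"
    then obtain ns c1 c2 where t: "t = (ns, c1, c2)" and ns: "ns \<in> splits xs"
      and c1: "c1 \<in> shuffle_codes (take_each ns xs)" and c2: "c2 \<in> shuffle_codes (drop_each ns xs)"
      by (auto simp: S_def)
    show "(case (case t of (ns, c1, c2) \<Rightarrow> (c1 @ c2, length c1)) of
           (cs, i) \<Rightarrow> (code_counts (take i cs) p, take i cs, drop i cs)) = t"
      using code_counts_take_each[OF c1 ns] by (simp add: t p_def)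
    show "(case t of (ns, c1, c2) \<Rightarrow> (c1 @ c2, length c1)) \<in> T"
      using append_in_shuffle_codes[OF ns c1 c2] by (simp add: t T_def)
  next
    fix u assume "u \<in> T"
    then obtain cs i where u: "u = (cs, i)" and cs: "cs \<in> shuffle_codes xs" and i: "i \<le> length cs"
      by (auto simp: T_def)
    show "(case (case u of (cs, i) \<Rightarrow> (code_counts (take i cs) p, take i cs, drop i cs)) of
           (ns, c1, c2) \<Rightarrow> (c1 @ c2, length c1)) = u"
      using i by (simp add: u)
    show "(case u of (cs, i) \<Rightarrow> (code_counts (take i cs) p, take i cs, drop i cs)) \<in> S"
      using code_counts_take_in_splits[OF cs] take_in_shuffle_codes[OF cs] drop_in_shuffle_codes[OF cs]
      by (simp add: u S_def p_def)
    show "g (case u of (cs, i) \<Rightarrow> (code_counts (take i cs) p, take i cs, drop i cs)) = h u"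
      using interleave_take_each[OF take_in_shuffle_codes[OF cs]] i
      by (simp add: u h_def g_def p_def take_interleave drop_interleave[OF cs])
  qed
  also have "\<dots> = (\<Sum>ns\<in>splits xs. \<Sum>(c1, c2)\<in>shuffle_codes (take_each ns xs) \<times> shuffle_codes (drop_each ns xs).
      g (ns, c1, c2))"
    unfolding S_def by (simp add: sum.Sigma finite_splits finite_shuffle_codes split_def)
  also have "\<dots> = (\<Sum>ns\<in>splits xs. shuffle_pairing a (take_each ns xs) * shuffle_pairing b (drop_each ns xs))"
    unfolding shuffle_pairing_def g_def sum_product
    by (simp add: sum.cartesian_product split_def)
  finally show ?thesis .
qed

lemma in_shuffle_code_nonempty:
  assumes "cs \<in> shuffle_codes xs" "c \<in> set cs"
  shows "c < length xs" "xs ! c \<noteq> []"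
proof -
  show c: "c < length xs" using assms by (auto simp: shuffle_codes_def)
  have "count_list cs c \<noteq> 0" using assms(2) by (simp add: count_list_0_iff)
  then show "xs ! c \<noteq> []" using assms(1) c by (auto simp: shuffle_codes_def)
qed

lemma shuffle_pairing_single:
  assumes k: "k < length xs" and z: "\<forall>l<length xs. l \<noteq> k \<longrightarrow> xs!l = []"
  shows "shuffle_pairing f xs = f (xs!k)"
proof -
  define m where "m = length (xs!k)"
  have "shuffle_codes xs = {replicate m k}"
  proof
    show "shuffle_codes xs \<subseteq> {replicate m k}"
    proof
      fix cs assume cs: "cs \<in> shuffle_codes xs"
      then have "\<forall>c\<in>set cs. c = k" using z in_shuffle_code_nonempty by blast
      then have rep: "cs = replicate (length cs) k" using replicate_length_same by metis
      have "count_list cs k = m" using cs k by (simp add: shuffle_codes_def m_def)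
      then have "length cs = m" by (subst (asm) rep) (simp add: count_list_replicate)
      then show "cs \<in> {replicate m k}" using rep by simp
    qed
    show "{replicate m k} \<subseteq> shuffle_codes xs"
      using k z by (auto simp: shuffle_codes_def count_list_replicate m_def)
  qed
  moreover have "interleave (replicate m k) xs = xs!k"
    by (rule nth_equalityI) (auto simp: m_def nth_interleave count_list_replicate min_def)
  ultimately show ?thesis by (simp add: shuffle_pairing_def)
qed

lemma shuffle_pairing_all_Nil:
  assumes "\<forall>l<length xs. xs!l = []"
  shows "shuffle_pairing f xs = f []"
proof -
  have "shuffle_codes xs = {[]}"
  proof
    show "shuffle_codes xs \<subseteq> {[]}"
    proof
      fix cs assume "cs \<in> shuffle_codes xs"
      then have "set cs = {}" using assms in_shuffle_code_nonempty by (meson equals0I)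
      then show "cs \<in> {[]}" by simp
    qed
    show "{[]} \<subseteq> shuffle_codes xs" using assms by (auto simp: shuffle_codes_def)
  qed
  then show ?thesis by (simp add: shuffle_pairing_def interleave_def)
qed

lemma shuffle_pairing_homogeneous_eq_0:
  assumes "homogeneous d f" "(\<Sum>k<length xs. length (xs!k)) \<noteq> d"
  shows "shuffle_pairing f xs = 0"
  unfolding shuffle_pairing_def
proof (rule sum.neutral, rule ballI)
  fix cs assume cs: "cs \<in> shuffle_codes xs"
  have "length (interleave cs xs) \<noteq> d" using length_shuffle_code[OF cs] assms(2) by simp
  then show "f (interleave cs xs) = 0" using assms(1) homogeneousD by blast
qed

lemma shuffle_pairing_diff:
  "shuffle_pairing (\<lambda>w. f w - g w) xs = shuffle_pairing f xs - shuffle_pairing g xs"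
  unfolding shuffle_pairing_def by (rule sum_subtractf)

lemma shuffle_pairing_fone: "shuffle_pairing fone xs = (\<Prod>m<length xs. fone (xs!m))"
proof (cases "\<forall>l<length xs. xs!l = []")
  case True
  then show ?thesis by (simp add: shuffle_pairing_all_Nil fone_def)
next
  case False
  then obtain m where m: "m < length xs" "xs!m \<noteq> []" by blast
  have "length (xs!m) \<le> (\<Sum>k<length xs. length (xs!k))"
    using m by (intro member_le_sum) auto
  then have "shuffle_pairing fone xs = 0"
    using m by (intro shuffle_pairing_homogeneous_eq_0[OF homogeneous_fone]) auto
  moreover have "(\<Prod>m<length xs. fone (xs!m)) = (0::'a)"
    using m by (intro prod_zero) (auto simp: fone_def intro!: bexI[of _ m])
  ultimately show ?thesis by simp
qed

section \<open>Primitive elements\<close>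

text \<open>Primitivity for the shuffle coproduct, phrased through the pairing.\<close>

definition primitive :: "'k::comm_ring_1 fa \<Rightarrow> bool" where
  "primitive P \<longleftrightarrow> P [] = 0 \<and>
     (\<forall>xs k l. k < length xs \<and> l < length xs \<and> k \<noteq> l \<and> xs!k \<noteq> [] \<and> xs!l \<noteq> []
        \<longrightarrow> shuffle_pairing P xs = 0)"

lemma primitiveD:
  "primitive P \<Longrightarrow> k < length xs \<Longrightarrow> l < length xs \<Longrightarrow> k \<noteq> l \<Longrightarrow> xs!k \<noteq> [] \<Longrightarrow> xs!l \<noteq> []
    \<Longrightarrow> shuffle_pairing P xs = 0"
  unfolding primitive_def by blast

lemma primitive_Nil: "primitive P \<Longrightarrow> P [] = 0"
  unfolding primitive_def by blast

lemma primitive_letter: "primitive (letter a)"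
  unfolding primitive_def
proof (intro conjI allI impI)
  show "letter a [] = 0" by (simp add: letter_def)
  fix xs :: "nat list list" and k l
  assume kl: "k < length xs \<and> l < length xs \<and> k \<noteq> l \<and> xs ! k \<noteq> [] \<and> xs ! l \<noteq> []"
  then have "length (xs!k) + length (xs!l) = (\<Sum>m\<in>{k,l}. length (xs!m))" by simp
  also have "\<dots> \<le> (\<Sum>m<length xs. length (xs!m))"
    by (rule sum_mono2) (use kl in auto)
  moreover have "length (xs!k) \<noteq> 0" "length (xs!l) \<noteq> 0" using kl by auto
  ultimately have "(\<Sum>m<length xs. length (xs!m)) \<noteq> 1" by linarith
  then show "shuffle_pairing (letter a) xs = 0"
    by (rule shuffle_pairing_homogeneous_eq_0[OF homogeneous_letter])
qed

lemma primitive_split_product_eq_0: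
  assumes pa: "primitive a" and pb: "primitive b" and ns: "ns \<in> splits xs"
    and m: "m < length xs" "0 < ns!m" "ns!m < length (xs!m)"
    and m': "m' < length xs" "m' \<noteq> m" "xs!m' \<noteq> []"
  shows "shuffle_pairing a (take_each ns xs) * shuffle_pairing b (drop_each ns xs) = 0"
proof -
  have t: "take_each ns xs ! m \<noteq> []" and d: "drop_each ns xs ! m \<noteq> []" using m by auto
  have "take_each ns xs ! m' \<noteq> [] \<or> drop_each ns xs ! m' \<noteq> []"
  proof (rule ccontr)
    assume "\<not> ?thesis"
    then have "take (ns!m') (xs!m') = []" "drop (ns!m') (xs!m') = []" using m' by auto
    then have "xs!m' = []" by (metis append_Nil append_take_drop_id)
    then show False using m' by simp
  qed
  then show ?thesis
  proof
    assume "take_each ns xs ! m' \<noteq> []"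
    then have "shuffle_pairing a (take_each ns xs) = 0"
      using primitiveD[OF pa, of m "take_each ns xs" m'] t m m' by simp
    then show ?thesis by simp
  next
    assume "drop_each ns xs ! m' \<noteq> []"
    then have "shuffle_pairing b (drop_each ns xs) = 0"
      using primitiveD[OF pb, of m "drop_each ns xs" m'] d m m' by simp
    then show ?thesis by simp
  qed
qed

definition complement_split :: "'a list list \<Rightarrow> nat list \<Rightarrow> nat list" where
  "complement_split xs ns = map (\<lambda>m. length (xs!m) - ns!m) [0..<length xs]"

lemma complement_split_in_splits: "ns \<in> splits xs \<Longrightarrow> complement_split xs ns \<in> splits xs"
  by (auto simp: complement_split_def splits_def)

lemma complement_split_complement_split:
  "ns \<in> splits xs \<Longrightarrow> complement_split xs (complement_split xs ns) = ns"
  by (intro nth_equalityI) (auto simp: complement_split_def splits_def)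

text \<open>Unless it cuts some word strictly inside, complementing a split just exchanges
prefixes and suffixes; and if it does cut a word strictly inside, both sides vanish by
primitivity.\<close>

lemma shuffle_pairing_complement_split:
  assumes pa: "primitive a" and pb: "primitive b" and ns: "ns \<in> splits xs"
    and kl: "k < length xs" "l < length xs" "k \<noteq> l" "xs!k \<noteq> []" "xs!l \<noteq> []"
  shows "shuffle_pairing a (take_each (complement_split xs ns) xs) *
      shuffle_pairing b (drop_each (complement_split xs ns) xs) =
    shuffle_pairing b (take_each ns xs) * shuffle_pairing a (drop_each ns xs)"
proof (cases "\<exists>m<length xs. 0 < ns!m \<and> ns!m < length (xs!m)")
  case True
  then obtain m where m: "m < length xs" "0 < ns!m" "ns!m < length (xs!m)" by blast
  obtain m' where m': "m' < length xs" "m' \<noteq> m" "xs!m' \<noteq> []"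
    using kl by (cases "k = m") auto
  have "shuffle_pairing b (take_each ns xs) * shuffle_pairing a (drop_each ns xs) = 0"
    by (rule primitive_split_product_eq_0[OF pb pa ns m m'])
  moreover have "shuffle_pairing a (take_each (complement_split xs ns) xs) *
      shuffle_pairing b (drop_each (complement_split xs ns) xs) = 0"
    by (rule primitive_split_product_eq_0[OF pa pb complement_split_in_splits[OF ns] _ _ _ m'])
      (use m in \<open>auto simp: complement_split_def\<close>)
  ultimately show ?thesis by simp
next
  case False
  then have F: "\<forall>m<length xs. ns!m = 0 \<or> ns!m = length (xs!m)"
    using ns by (force simp: splits_def)
  have "take_each (complement_split xs ns) xs = drop_each ns xs"
    by (rule nth_equalityI) (use F in \<open>auto simp: complement_split_def\<close>)
  moreover have "drop_each (complement_split xs ns) xs = take_each ns xs"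
    by (rule nth_equalityI) (use F in \<open>auto simp: complement_split_def\<close>)
  ultimately show ?thesis by (simp add: mult.commute)
qed

lemma shuffle_pairing_fmul_commute:
  assumes "primitive a" "primitive b"
    and "k < length xs" "l < length xs" "k \<noteq> l" "xs!k \<noteq> []" "xs!l \<noteq> []"
  shows "shuffle_pairing (fmul a b) xs = shuffle_pairing (fmul b a) xs"
proof -
  have "shuffle_pairing (fmul a b) xs =
      (\<Sum>ns\<in>splits xs. shuffle_pairing a (take_each ns xs) * shuffle_pairing b (drop_each ns xs))"
    by (rule shuffle_pairing_fmul)
  also have "\<dots> = (\<Sum>ns\<in>splits xs. shuffle_pairing a (take_each (complement_split xs ns) xs) *
      shuffle_pairing b (drop_each (complement_split xs ns) xs))"
    by (rule sum.reindex_bij_witness[where i = "complement_split xs" and j = "complement_split xs"])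
      (auto simp: complement_split_in_splits complement_split_complement_split)
  also have "\<dots> = (\<Sum>ns\<in>splits xs.
      shuffle_pairing b (take_each ns xs) * shuffle_pairing a (drop_each ns xs))"
    using shuffle_pairing_complement_split[OF assms(1,2) _ assms(3-)] by (intro sum.cong) auto
  also have "\<dots> = shuffle_pairing (fmul b a) xs"
    by (rule shuffle_pairing_fmul[symmetric])
  finally show ?thesis .
qed

lemma primitive_comm:
  assumes "primitive a" "primitive b"
  shows "primitive (comm a b)"
  unfolding primitive_def
proof (intro conjI allI impI)
  show "comm a b [] = 0" using primitive_Nil[OF assms(1)] by (simp add: comm_def fmul_Nil)
  fix xs :: "nat list list" and k l
  assume "k < length xs \<and> l < length xs \<and> k \<noteq> l \<and> xs ! k \<noteq> [] \<and> xs ! l \<noteq> []"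
  then have "shuffle_pairing (fmul a b) xs = shuffle_pairing (fmul b a) xs"
    using shuffle_pairing_fmul_commute[OF assms] by blast
  then show "shuffle_pairing (comm a b) xs = 0"
    unfolding comm_def by (simp add: shuffle_pairing_diff)
qed

lemma foldl_comm_letter_props:
  assumes "primitive a" "homogeneous d a" "letters_in A a" "set ss \<subseteq> A"
  shows "primitive (foldl (\<lambda>acc x. comm acc (letter x)) a ss) \<and>
         homogeneous (d + length ss) (foldl (\<lambda>acc x. comm acc (letter x)) a ss) \<and>
         letters_in A (foldl (\<lambda>acc x. comm acc (letter x)) a ss)"
  using assms
proof (induction ss arbitrary: a d)
  case Nil
  then show ?case by simp
next
  case (Cons s ss)
  have "primitive (comm a (letter s))"
    using primitive_comm[OF Cons.prems(1) primitive_letter] .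
  moreover have "homogeneous (d + 1) (comm a (letter s))"
    using homogeneous_comm[OF Cons.prems(2) homogeneous_letter] .
  moreover have "letters_in A (comm a (letter s))"
    using Cons.prems(3,4) by (simp add: letters_in_comm letters_in_letter)
  ultimately show ?case using Cons.IH[of "comm a (letter s)" "d + 1"] Cons.prems(4) by simp
qed

lemma
  assumes "finite S" "S \<noteq> {}"
  shows primitive_Vset: "primitive (Vset S :: 'k::comm_ring_1 fa)"
    and homogeneous_Vset: "homogeneous (card S) (Vset S :: 'k fa)"
    and letters_in_Vset: "letters_in S (Vset S :: 'k fa)"
proof -
  obtain s ss where sl: "sorted_list_of_set S = s # ss"
    using assms by (cases "sorted_list_of_set S") auto
  have set: "set (s # ss) = S" using set_sorted_list_of_set[OF assms(1)] unfolding sl .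
  have len: "card S = 1 + length ss"
    using length_sorted_list_of_set[of S] unfolding sl by simp
  have V: "Vset S = foldl (\<lambda>acc x. comm acc (letter x)) (letter s) ss"
    unfolding Vset_def sl by simp
  have "s \<in> S" "set ss \<subseteq> S" using set by auto
  note props = foldl_comm_letter_props[OF primitive_letter homogeneous_letter letters_in_letter, OF this]
  show "primitive (Vset S :: 'k fa)" "homogeneous (card S) (Vset S :: 'k fa)"
      "letters_in S (Vset S :: 'k fa)"
    using props unfolding V len by auto
qed

section \<open>Pairing with products of primitive elements\<close>

text \<open>An assignment \<open>fs\<close> sends the \<open>j\<close>-th factor of a product to the word \<open>fs!j\<close>;
\<open>assigned_product Ps fs m\<close> is the ordered product of the factors sent to word \<open>m\<close>.\<close>

definition assignments :: "nat \<Rightarrow> nat \<Rightarrow> nat list set" where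
  "assignments q p = {fs. length fs = q \<and> set fs \<subseteq> {..<p}}"

definition assigned_product :: "'k::comm_ring_1 fa list \<Rightarrow> nat list \<Rightarrow> nat \<Rightarrow> 'k fa" where
  "assigned_product Ps fs m = fprod (map fst (filter (\<lambda>x. snd x = m) (zip Ps fs)))"

lemma finite_assignments: "finite (assignments q p)"
  unfolding assignments_def using finite_lists_length_eq[of "{..<p}" q] by (simp add: conj_commute)

lemma assigned_product_Cons:
  "assigned_product (P # Ps) (k # fs) m =
     (if k = m then fmul P (assigned_product Ps fs m) else assigned_product Ps fs m)"
  by (simp add: assigned_product_def fprod_def)

lemma assigned_product_notin:
  assumes "m \<notin> set fs"
  shows "assigned_product Ps fs m = fone"
proof -
  have "filter (\<lambda>x. snd x = m) (zip Ps fs) = []"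
    using assms by (auto simp: filter_empty_conv dest: set_zip_rightD)
  then show ?thesis by (simp add: assigned_product_def fprod_def)
qed

lemma sum_assignments_Suc:
  "(\<Sum>fs\<in>assignments (Suc q) p. H fs) = (\<Sum>k<p. \<Sum>fs\<in>assignments q p. H (k # fs))"
proof -
  have "(\<Sum>k<p. \<Sum>fs\<in>assignments q p. H (k # fs)) =
      (\<Sum>z\<in>{..<p} \<times> assignments q p. H (fst z # snd z))"
    using sum.cartesian_product[of "\<lambda>k fs. H (k # fs)" "assignments q p" "{..<p}"]
    by (simp add: split_def)
  also have "\<dots> = (\<Sum>fs\<in>assignments (Suc q) p. H fs)"
    by (rule sum.reindex_bij_witness[where i = "\<lambda>fs. (hd fs, tl fs)" and j = "\<lambda>z. fst z # snd z"])
       (auto simp: assignments_def length_Suc_conv)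
  finally show ?thesis by simp
qed

lemma fmul_eq_sum_nonempty_prefix:
  assumes "P [] = 0"
  shows "fmul P G w = (\<Sum>i\<in>{1..length w}. P (take i w) * G (drop i w))"
  unfolding fmul_def
  by (rule sum.mono_neutral_right) (use assms in \<open>auto simp: Suc_le_eq\<close>)

lemma prod_lessThan_list_update:
  assumes "k < length xs"
  shows "(\<Prod>m<length xs. F m (xs[k := y] ! m)) = F k y * (\<Prod>m\<in>{..<length xs} - {k}. F m (xs!m))"
proof -
  have "(\<Prod>m<length xs. F m (xs[k := y] ! m)) =
      F k (xs[k := y] ! k) * (\<Prod>m\<in>{..<length xs} - {k}. F m (xs[k := y] ! m))"
    using assms by (intro prod.remove) auto
  also have "(\<Prod>m\<in>{..<length xs} - {k}. F m (xs[k := y] ! m)) = (\<Prod>m\<in>{..<length xs} - {k}. F m (xs!m))"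
    by (intro prod.cong) auto
  finally show ?thesis using assms by simp
qed

definition single_split :: "nat \<Rightarrow> nat \<Rightarrow> nat \<Rightarrow> nat list" where
  "single_split p k i = (replicate p 0)[k := i]"

lemma inj_on_single_split: "inj_on (\<lambda>(k, i). single_split p k i) ({..<p} \<times> {0<..})"
proof (rule inj_onI)
  fix a b assume "a \<in> {..<p} \<times> {0<..}" "b \<in> {..<p} \<times> {0<..}"
    and eq: "(\<lambda>(k, i). single_split p k i) a = (\<lambda>(k, i). single_split p k i) b"
  then obtain k i k' i' where ab: "a = (k, i)" "b = (k', i')" "k < p" "0 < i" "k' < p" by auto
  have "single_split p k i ! k = single_split p k' i' ! k" using eq by (simp add: ab)
  then have "k = k' \<and> i = i'" using ab by (auto simp: single_split_def nth_list_update split: if_splits)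
  then show "a = b" by (simp add: ab)
qed

lemma primitive_pairing_take_each_nonzero:
  assumes P: "primitive P" and ns: "ns \<in> splits xs"
    and ne: "shuffle_pairing P (take_each ns xs) \<noteq> 0"
  obtains k where "k < length xs" "0 < ns!k" "ns = single_split (length xs) k (ns!k)"
proof -
  have "\<exists>k<length xs. take_each ns xs ! k \<noteq> []"
  proof (rule ccontr)
    assume "\<not> ?thesis"
    then have "shuffle_pairing P (take_each ns xs) = P []" by (intro shuffle_pairing_all_Nil) auto
    then show False using ne primitive_Nil[OF P] by simp
  qed
  then obtain k where k: "k < length xs" "take_each ns xs ! k \<noteq> []" by blast
  have "take_each ns xs ! l = []" if "l < length xs" "l \<noteq> k" for l
  proof (rule ccontr)
    assume "take_each ns xs ! l \<noteq> []"
    then show False using primitiveD[OF P, of k "take_each ns xs" l] ne k that by simp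
  qed
  then have "ns!l = 0" if "l < length xs" "l \<noteq> k" for l
    using ns that by (force simp: splits_def)
  then have "ns = single_split (length xs) k (ns!k)"
    using ns k(1) by (intro nth_equalityI) (auto simp: single_split_def splits_def nth_list_update)
  moreover have "0 < ns!k" using k by simp
  ultimately show ?thesis using k that by blast
qed

text \<open>With \<open>P\<close> primitive, only the splits that cut off a nonempty prefix of a single word
contribute to the pairing of \<open>fmul P R\<close>.\<close>

lemma shuffle_pairing_primitive_fmul:
  assumes P: "primitive P"
  shows "shuffle_pairing (fmul P R) xs =
    (\<Sum>k<length xs. \<Sum>i\<in>{1..length (xs!k)}.
       P (take i (xs!k)) * shuffle_pairing R (xs[k := drop i (xs!k)]))"
proof -
  define p where "p = length xs"
  define Sg where "Sg = (SIGMA k:{..<p}. {1..length (xs!k)})"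
  define e where "e = (\<lambda>(k, i). single_split p k i)"
  define t where "t = (\<lambda>ns. shuffle_pairing P (take_each ns xs) * shuffle_pairing R (drop_each ns xs))"
  have e_Sg: "e ` Sg \<subseteq> splits xs"
    by (auto simp: e_def Sg_def single_split_def splits_def p_def nth_list_update)
  have zero: "t ns = 0" if ns: "ns \<in> splits xs - e ` Sg" for ns
  proof (rule ccontr)
    assume "t ns \<noteq> 0"
    then have "shuffle_pairing P (take_each ns xs) \<noteq> 0" by (auto simp: t_def)
    then obtain k where k: "k < p" "0 < ns!k" "ns = single_split p k (ns!k)"
      using primitive_pairing_take_each_nonzero[OF P] ns by (auto simp: p_def)
    moreover have "ns!k \<le> length (xs!k)" using k ns by (auto simp: splits_def p_def)
    ultimately have "ns \<in> e ` Sg" unfolding e_def Sg_def by force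
    then show False using ns by blast
  qed
  have inj: "inj_on e Sg"
    unfolding e_def Sg_def by (rule inj_on_subset[OF inj_on_single_split]) auto
  have "shuffle_pairing (fmul P R) xs = (\<Sum>ns\<in>splits xs. t ns)"
    unfolding shuffle_pairing_fmul t_def ..
  also have "\<dots> = (\<Sum>ns\<in>e ` Sg. t ns)"
    by (rule sum.mono_neutral_right[OF finite_splits e_Sg]) (use zero in blast)
  also have "\<dots> = (\<Sum>(k, i)\<in>Sg. P (take i (xs!k)) * shuffle_pairing R (xs[k := drop i (xs!k)]))"
    unfolding sum.reindex[OF inj]
  proof (rule sum.cong[OF refl], clarify)
    fix k i assume "(k, i) \<in> Sg"
    then have k: "k < p" by (simp add: Sg_def)
    have "shuffle_pairing P (take_each (single_split p k i) xs) = P (take_each (single_split p k i) xs ! k)"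
      by (rule shuffle_pairing_single) (use k in \<open>auto simp: single_split_def p_def nth_list_update\<close>)
    moreover have "drop_each (single_split p k i) xs = xs[k := drop i (xs!k)]"
      by (rule nth_equalityI) (use k in \<open>auto simp: single_split_def p_def nth_list_update\<close>)
    ultimately show "(t \<circ> e) (k, i) = P (take i (xs!k)) * shuffle_pairing R (xs[k := drop i (xs!k)])"
      using k by (simp add: t_def e_def single_split_def p_def)
  qed
  also have "\<dots> = (\<Sum>k<p. \<Sum>i\<in>{1..length (xs!k)}.
      P (take i (xs!k)) * shuffle_pairing R (xs[k := drop i (xs!k)]))"
    unfolding Sg_def by (simp add: sum.Sigma split_def)
  finally show ?thesis by (simp add: p_def)
qed

lemma shuffle_pairing_fprod:
  assumes "\<forall>P\<in>set Ps. primitive P"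
  shows "shuffle_pairing (fprod Ps) xs =
    (\<Sum>fs\<in>assignments (length Ps) (length xs). \<Prod>m<length xs. assigned_product Ps fs m (xs!m))"
  using assms
proof (induction Ps arbitrary: xs)
  case Nil
  have "assignments 0 (length xs) = {[]}" by (auto simp: assignments_def)
  then show ?case by (simp add: fprod_Nil shuffle_pairing_fone assigned_product_def)
next
  case (Cons P Ps)
  define p where "p = length xs"
  define q where "q = length Ps"
  define Rest where "Rest = (\<lambda>k fs. \<Prod>m\<in>{..<p} - {k}. assigned_product Ps fs m (xs!m))"
  have P: "primitive P" using Cons.prems by simp
  have "shuffle_pairing (fprod (P # Ps)) xs = (\<Sum>k<p. \<Sum>i\<in>{1..length (xs!k)}.
      P (take i (xs!k)) * shuffle_pairing (fprod Ps) (xs[k := drop i (xs!k)]))"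
    unfolding fprod_Cons shuffle_pairing_primitive_fmul[OF P] p_def ..
  also have "\<dots> = (\<Sum>k<p. \<Sum>i\<in>{1..length (xs!k)}. \<Sum>fs\<in>assignments q p.
      P (take i (xs!k)) * (assigned_product Ps fs k (drop i (xs!k)) * Rest k fs))"
    using Cons by (intro sum.cong refl)
      (simp add: p_def q_def Rest_def prod_lessThan_list_update sum_distrib_left)
  also have "\<dots> = (\<Sum>k<p. \<Sum>fs\<in>assignments q p.
      (\<Sum>i\<in>{1..length (xs!k)}. P (take i (xs!k)) * assigned_product Ps fs k (drop i (xs!k))) * Rest k fs)"
    by (intro sum.cong refl, subst sum.swap) (simp add: sum_distrib_right mult.assoc)
  also have "\<dots> = (\<Sum>k<p. \<Sum>fs\<in>assignments q p. \<Prod>m<p. assigned_product (P # Ps) (k # fs) m (xs!m))"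
  proof (intro sum.cong refl)
    fix k fs assume k: "k \<in> {..<p}"
    have "(\<Prod>m<p. assigned_product (P # Ps) (k # fs) m (xs!m)) =
        assigned_product (P # Ps) (k # fs) k (xs!k) *
        (\<Prod>m\<in>{..<p} - {k}. assigned_product (P # Ps) (k # fs) m (xs!m))"
      using k by (intro prod.remove) auto
    also have "(\<Prod>m\<in>{..<p} - {k}. assigned_product (P # Ps) (k # fs) m (xs!m)) = Rest k fs"
      unfolding Rest_def by (intro prod.cong) (auto simp: assigned_product_Cons)
    finally show "(\<Sum>i\<in>{1..length (xs!k)}. P (take i (xs!k)) * assigned_product Ps fs k (drop i (xs!k))) *
        Rest k fs = (\<Prod>m<p. assigned_product (P # Ps) (k # fs) m (xs!m))"
      using primitive_Nil[OF P] by (simp add: assigned_product_Cons fmul_eq_sum_nonempty_prefix)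
  qed
  also have "\<dots> = (\<Sum>fs\<in>assignments (Suc q) p. \<Prod>m<p. assigned_product (P # Ps) fs m (xs!m))"
    by (rule sum_assignments_Suc[symmetric])
  finally show ?case by (simp add: p_def q_def)
qed

lemma filter_upt_eq_single:
  assumes "a < p"
  shows "filter (\<lambda>j. j = a) [0..<p] = [a]"
proof -
  have "[0..<p] = [0..<a] @ a # [Suc a..<p]"
    using assms by (metis le_add1 less_imp_add_positive upt_add_eq_append upt_conv_Cons add_0
        order.strict_implies_order)
  then show ?thesis by (simp add: filter_empty_conv)
qed

lemma assigned_product_permutation:
  assumes tau: "tau permutes {..<p}" and len: "length Ps = p" and m: "m < p"
  shows "assigned_product Ps (map tau [0..<p]) m = Ps ! (inv tau m)"
proof -
  have im: "inv tau m < p" using permutes_in_image[OF permutes_inv[OF tau]] m by simp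
  have z: "zip Ps (map tau [0..<p]) = map (\<lambda>j. (Ps!j, tau j)) [0..<p]"
    by (rule nth_equalityI) (use len in auto)
  have "filter (\<lambda>x. snd x = m) (zip Ps (map tau [0..<p])) =
      map (\<lambda>j. (Ps!j, tau j)) (filter (\<lambda>j. tau j = m) [0..<p])"
    unfolding z by (simp add: filter_map comp_def)
  also have "filter (\<lambda>j. tau j = m) [0..<p] = filter (\<lambda>j. j = inv tau m) [0..<p]"
    by (rule filter_cong[OF refl]) (metis permutes_inv_eq[OF tau])
  also have "\<dots> = [inv tau m]" by (rule filter_upt_eq_single[OF im])
  finally show ?thesis by (simp add: assigned_product_def fprod_def fmul_fone_right)
qed

lemma sum_surjective_assignments:
  "(\<Sum>fs\<in>{fs\<in>assignments p p. set fs = {..<p}}. H fs) =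
     (\<Sum>tau | tau permutes {..<p}. H (map tau [0..<p]))"
proof (rule sum.reindex_bij_witness[where j = "\<lambda>fs m. if m < p then fs!m else m"
      and i = "\<lambda>tau. map tau [0..<p]"])
  fix fs assume "fs \<in> {fs\<in>assignments p p. set fs = {..<p}}"
  then have lfs: "length fs = p" and sfs: "set fs = {..<p}" by (auto simp: assignments_def)
  show map_fs: "map (\<lambda>m. if m < p then fs!m else m) [0..<p] = fs"
    by (rule nth_equalityI) (use lfs in auto)
  then show "H (map (\<lambda>m. if m < p then fs!m else m) [0..<p]) = H fs" by simp
  have dist: "distinct fs" using lfs sfs by (intro card_distinct) simp
  have "bij_betw (\<lambda>m. if m < p then fs!m else m) {..<p} {..<p}"
  proof (rule bij_betw_imageI)
    show "inj_on (\<lambda>m. if m < p then fs!m else m) {..<p}"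
      using dist lfs by (auto simp: inj_on_def nth_eq_iff_index_eq)
    show "(\<lambda>m. if m < p then fs!m else m) ` {..<p} = {..<p}"
      using lfs sfs by (auto simp: set_conv_nth image_def)
  qed
  then show "(\<lambda>m. if m < p then fs!m else m) \<in> {tau. tau permutes {..<p}}"
    by (auto intro!: bij_imp_permutes split: if_splits)
next
  fix tau assume "tau \<in> {tau. tau permutes {..<p}}"
  then have tau: "tau permutes {..<p}" by simp
  show "(\<lambda>m. if m < p then map tau [0..<p] ! m else m) = tau"
    using permutes_not_in[OF tau] by (auto simp: fun_eq_iff)
  have "set (map tau [0..<p]) = {..<p}"
    using permutes_image[OF tau] by (simp add: lessThan_atLeast0)
  then show "map tau [0..<p] \<in> {fs \<in> assignments p p. set fs = {..<p}}"
    by (simp add: assignments_def)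
qed

text \<open>A word receiving no factor contributes \<open>fone\<close>, which vanishes on nonempty words; so
with as many factors as words only the bijective assignments survive.\<close>

lemma shuffle_pairing_fprod_permutes:
  assumes prim: "\<forall>P\<in>set Ps. primitive P" and len: "length Ps = length xs"
    and ne: "\<forall>m<length xs. xs!m \<noteq> []"
  shows "shuffle_pairing (fprod Ps) xs =
    (\<Sum>tau | tau permutes {..<length xs}. \<Prod>m<length xs. (Ps ! (tau m)) (xs!m))"
proof -
  define p where "p = length xs"
  define T where "T = (\<lambda>fs. \<Prod>m<p. assigned_product Ps fs m (xs!m))"
  have "shuffle_pairing (fprod Ps) xs = (\<Sum>fs\<in>assignments p p. T fs)"
    using shuffle_pairing_fprod[OF prim] len by (simp add: p_def T_def)
  also have "\<dots> = (\<Sum>fs\<in>{fs\<in>assignments p p. set fs = {..<p}}. T fs)"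
  proof (rule sum.mono_neutral_right[OF finite_assignments])
    show "\<forall>fs\<in>assignments p p - {fs \<in> assignments p p. set fs = {..<p}}. T fs = 0"
    proof
      fix fs assume "fs \<in> assignments p p - {fs \<in> assignments p p. set fs = {..<p}}"
      then obtain m where m: "m < p" "m \<notin> set fs" by (auto simp: assignments_def)
      then have "assigned_product Ps fs m (xs!m) = 0"
        using ne by (simp add: assigned_product_notin fone_def p_def)
      then show "T fs = 0" unfolding T_def using m by (intro prod_zero) auto
    qed
  qed blast
  also have "\<dots> = (\<Sum>tau | tau permutes {..<p}. T (map tau [0..<p]))"
    by (rule sum_surjective_assignments)
  also have "\<dots> = (\<Sum>tau | tau permutes {..<p}. \<Prod>m<p. (Ps ! (inv tau m)) (xs!m))"
    unfolding T_def
    by (intro sum.cong refl prod.cong) (use len in \<open>auto simp: assigned_product_permutation p_def\<close>)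
  also have "\<dots> = (\<Sum>tau | tau permutes {..<p}. \<Prod>m<p. (Ps ! (tau m)) (xs!m))"
    by (subst sum_permutations_inverse) (intro sum.cong refl, auto simp: permutes_inv_inv)
  finally show ?thesis by (simp add: p_def)
qed

section \<open>Blocks and chunks of a composition\<close>

text \<open>Positions are counted from 1 and blocks from 0: \<open>block_offset gs c\<close> is the number of
positions before block \<open>c\<close> of the composition \<open>gs\<close>, and \<open>block_index gs x\<close> is the block
containing position \<open>x\<close>. So the set \<open>block gs i\<close> is block number \<open>i - 1\<close>.\<close>

fun block_index :: "nat list \<Rightarrow> nat \<Rightarrow> nat" where
  "block_index [] x = 0"
| "block_index (g # gs) x = (if x \<le> g then 0 else Suc (block_index gs (x - g)))"

definition block_offset :: "nat list \<Rightarrow> nat \<Rightarrow> nat" where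
  "block_offset gs c = sum_list (take c gs)"

fun chunks :: "nat list \<Rightarrow> 'a list \<Rightarrow> 'a list list" where
  "chunks [] w = []"
| "chunks (g # gs) w = take g w # chunks gs (drop g w)"

lemma block_offset_0[simp]: "block_offset gs 0 = 0"
  by (simp add: block_offset_def)

lemma block_offset_Cons_Suc[simp]: "block_offset (g # gs) (Suc c) = g + block_offset gs c"
  by (simp add: block_offset_def)

lemma block_offset_Suc: "c < length gs \<Longrightarrow> block_offset gs (Suc c) = block_offset gs c + gs!c"
  by (simp add: block_offset_def take_Suc_conv_app_nth)

lemma block_offset_length: "block_offset gs (length gs) = sum_list gs"
  by (simp add: block_offset_def)

lemma block_offset_le_sum_list: "block_offset gs c \<le> sum_list gs"
  by (metis block_offset_def append_take_drop_id le_add1 sum_list_append)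

lemma block_offset_add_le_sum_list:
  "c < length gs \<Longrightarrow> block_offset gs c + gs!c \<le> sum_list gs"
  using block_offset_Suc block_offset_le_sum_list by metis

lemma block_index_bounds:
  assumes "1 \<le> x" "x \<le> sum_list gs"
  shows "block_index gs x < length gs \<and> block_offset gs (block_index gs x) < x \<and>
    x \<le> block_offset gs (block_index gs x) + gs ! (block_index gs x)"
  using assms
proof (induction gs arbitrary: x)
  case Nil
  then show ?case by simp
next
  case (Cons g gs)
  show ?case
  proof (cases "x \<le> g")
    case True
    then show ?thesis using Cons.prems by simp
  next
    case False
    then have "1 \<le> x - g" "x - g \<le> sum_list gs" using Cons.prems by auto
    from Cons.IH[OF this] False show ?thesis by auto
  qed
qed

lemma block_index_eqI:
  assumes "c < length gs" "block_offset gs c < x" "x \<le> block_offset gs c + gs ! c"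
  shows "block_index gs x = c"
  using assms
proof (induction gs arbitrary: c x)
  case Nil
  then show ?case by simp
next
  case (Cons g gs)
  show ?case
  proof (cases c)
    case 0
    then show ?thesis using Cons.prems by simp
  next
    case (Suc c')
    then have "g < x" using Cons.prems by simp
    moreover have "block_index gs (x - g) = c'"
      using Cons.prems Suc by (intro Cons.IH) auto
    ultimately show ?thesis using Suc by simp
  qed
qed

lemma block_index_mono: "x \<le> y \<Longrightarrow> block_index gs x \<le> block_index gs y"
  by (induction gs arbitrary: x y) auto

lemma length_chunks[simp]: "length (chunks gs w) = length gs"
  by (induction gs arbitrary: w) auto

lemma nth_chunks: "c < length gs \<Longrightarrow> chunks gs w ! c = take (gs!c) (drop (block_offset gs c) w)"
proof (induction gs arbitrary: w c)
  case Nil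
  then show ?case by simp
next
  case (Cons g gs)
  then show ?case by (cases c) (auto simp: add.commute)
qed

lemma length_nth_chunks:
  assumes "c < length gs" "length w = sum_list gs"
  shows "length (chunks gs w ! c) = gs ! c"
  using assms block_offset_add_le_sum_list[OF assms(1)] by (simp add: nth_chunks)

lemma nth_nth_chunks:
  assumes "c < length gs" "length w = sum_list gs" "r < gs ! c"
  shows "chunks gs w ! c ! r = w ! (block_offset gs c + r)"
  using assms block_offset_add_le_sum_list[OF assms(1)] by (simp add: nth_chunks)

lemma fprod_homogeneous_apply:
  assumes "length ds = length as" "\<forall>k<length as. homogeneous (ds!k) (as!k)" "length w = sum_list ds"
  shows "fprod as w = (\<Prod>k<length as. (as!k) (chunks ds w ! k))"
  using assms
proof (induction as arbitrary: ds w)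
  case Nil then show ?case by (simp add: fprod_Nil fone_def)
next
  case (Cons a as)
  obtain d ds' where ds: "ds = d # ds'" using Cons.prems(1) by (cases ds) auto
  have ha: "homogeneous d a" using Cons.prems(2) ds by force
  have dl: "d \<le> length w" using Cons.prems(3) ds by simp
  have "fprod (a # as) w = a (take d w) * fprod as (drop d w)"
    unfolding fprod_Cons by (rule fmul_homogeneous_left[OF ha dl])
  also have "fprod as (drop d w) = (\<Prod>k<length as. (as!k) (chunks ds' (drop d w) ! k))"
    using Cons.prems ds by (intro Cons.IH) force+
  moreover have "(\<Prod>k<length (a # as). ((a#as)!k) (chunks ds w ! k)) =
     ((a#as)!0) (chunks ds w ! 0) * (\<Prod>k<length as. ((a#as)!Suc k) (chunks ds w ! Suc k))"
    by (simp only: length_Cons prod.lessThan_Suc_shift)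
  ultimately show ?case by (simp add: ds)
qed

lemma block_eq_block_offset: "block gs i = {block_offset gs (i - 1) + 1 .. block_offset gs i}"
  by (simp add: block_def block_offset_def)

lemma card_block:
  assumes "i \<in> {1..length gs}"
  shows "card (block gs i) = gs ! (i - 1)"
proof -
  have "i - 1 < length gs" "Suc (i - 1) = i" using assms by auto
  then have "block_offset gs i = block_offset gs (i - 1) + gs ! (i - 1)"
    using block_offset_Suc[of "i - 1" gs] by simp
  then show ?thesis by (simp add: block_eq_block_offset)
qed

lemma block_subset: "block gs i \<subseteq> {1..sum_list gs}"
  using block_offset_le_sum_list[of gs i] by (auto simp: block_eq_block_offset)

lemma SetC_iff_block_index_change:
  assumes pos: "\<forall>a\<in>set gs. 0 < a" and i: "1 \<le> i" "i < sum_list gs"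
  shows "i \<in> SetC gs \<longleftrightarrow> block_index gs i \<noteq> block_index gs (Suc i)"
proof
  assume "i \<in> SetC gs"
  then obtain c where c: "i = block_offset gs c" "1 \<le> c" "c \<le> length gs - 1"
    by (auto simp: SetC_def block_offset_def)
  have cl: "c < length gs" using c i by (cases "length gs") auto
  have "block_offset gs c = block_offset gs (c - 1) + gs!(c - 1)"
    using block_offset_Suc[of "c - 1" gs] cl c by simp
  moreover have "gs!(c - 1) > 0" "gs!c > 0" using pos cl by simp_all
  ultimately have "block_index gs i = c - 1" "block_index gs (Suc i) = c"
    using c cl by (auto intro!: block_index_eqI)
  then show "block_index gs i \<noteq> block_index gs (Suc i)" using c by simp
next
  assume ne: "block_index gs i \<noteq> block_index gs (Suc i)"
  define c where "c = block_index gs i"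
  have P: "c < length gs" "block_offset gs c < i" "i \<le> block_offset gs c + gs ! c"
    using block_index_bounds[of i gs] i by (auto simp: c_def)
  have "i = block_offset gs c + gs!c"
  proof (rule ccontr)
    assume "i \<noteq> block_offset gs c + gs!c"
    then have "block_index gs (Suc i) = c" using P by (intro block_index_eqI) auto
    then show False using ne c_def by simp
  qed
  then have eqi: "i = block_offset gs (Suc c)" using block_offset_Suc[OF P(1)] by simp
  then have "Suc c \<noteq> length gs" using i block_offset_length[of gs] by auto
  then have "Suc c \<le> length gs - 1" using P by simp
  then show "i \<in> SetC gs" using eqi unfolding SetC_def block_offset_def by force
qed

lemma permutes_atLeastAtMost_bounds:
  assumes "v permutes {1..n}" "1 \<le> x" "x \<le> n"
  shows "1 \<le> v x \<and> v x \<le> n"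
proof -
  have "x \<in> {1..n}" using assms by simp
  then have "v x \<in> {1..n}" by (simp only: permutes_in_image[OF assms(1)])
  then show ?thesis by simp
qed

lemma act_nth: "j < length w \<Longrightarrow> act w v ! j = w ! (v (Suc j) - 1)"
  by (simp add: act_def del: upt_Suc)

lemma length_act[simp]: "length (act w v) = length w"
  by (simp add: act_def del: upt_Suc)

lemma act_comp:
  assumes w: "length w = n" and v: "v permutes {1..n}"
  shows "act (act w u) v = act w (u \<circ> v)"
proof (rule nth_equalityI)
  fix j assume "j < length (act (act w u) v)"
  then have j: "j < n" using w by simp
  have "1 \<le> v (Suc j) \<and> v (Suc j) \<le> n" using permutes_atLeastAtMost_bounds[OF v, of "Suc j"] j by simp
  then have "v (Suc j) - 1 < length w" "Suc (v (Suc j) - 1) = v (Suc j)" using w by auto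
  then show "act (act w u) v ! j = act w (u \<circ> v) ! j"
    using j w by (simp add: act_nth)
qed simp

lemma act_id: "act w id = w"
  by (rule nth_equalityI) (simp_all add: act_nth)

lemma set_act:
  assumes w: "length w = n" and v: "v permutes {1..n}"
  shows "set (act w v) \<subseteq> set w"
proof
  fix a assume "a \<in> set (act w v)"
  then obtain j where j: "j < n" "a = act w v ! j" using w by (auto simp: in_set_conv_nth)
  have "1 \<le> v (Suc j) \<and> v (Suc j) \<le> n" using permutes_atLeastAtMost_bounds[OF v, of "Suc j"] j by simp
  then have "v (Suc j) - 1 < length w" using w by auto
  then show "a \<in> set w" using j w by (simp add: act_nth)
qed

section \<open>Permutations with descents in \<open>SetC \<gamma>\<close> as shuffles\<close>

text \<open>\<open>block_shuffles gs n\<close> consists of the inverses of the permutations whose descents lie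
in \<open>SetC gs\<close>; acting by them on a word shuffles its \<open>gs\<close>-chunks.\<close>

definition block_shuffles :: "nat list \<Rightarrow> nat \<Rightarrow> (nat \<Rightarrow> nat) set" where
  "block_shuffles gs n = {v. v permutes {1..n} \<and>
     (\<forall>x y. 1 \<le> x \<longrightarrow> x < y \<longrightarrow> y \<le> n \<longrightarrow> block_index gs (v x) = block_index gs (v y) \<longrightarrow> v x < v y)}"

lemma descents_in_SetC_step:
  assumes pos: "\<forall>a\<in>set gs. 0 < a" and n: "n = sum_list gs"
    and u: "u permutes {1..n}" and D: "Des n u \<subseteq> SetC gs"
    and i: "1 \<le> i" "i < n" and b: "block_index gs i = block_index gs (Suc i)"
  shows "u i < u (Suc i)"
proof -
  have isum: "i < sum_list gs" using i(2) n by simp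
  have "i \<notin> SetC gs" using SetC_iff_block_index_change[OF pos i(1) isum] b by simp
  then have "i \<notin> Des n u" using D by blast
  moreover have "i \<in> {1..n-1}" using i by simp
  ultimately have "\<not> u i > u (i + 1)" unfolding Des_def by blast
  moreover have "u i \<noteq> u (Suc i)" using inj_eq[OF permutes_inj[OF u], of i "Suc i"] by simp
  ultimately show ?thesis by simp
qed

lemma descents_in_SetC_within_block:
  assumes pos: "\<forall>a\<in>set gs. 0 < a" and n: "n = sum_list gs"
    and u: "u permutes {1..n}" and D: "Des n u \<subseteq> SetC gs"
    and ab: "1 \<le> a" "a < b" "b \<le> n" "block_index gs a = block_index gs b"
  shows "u a < u b"
proof -
  have main: "a + Suc d \<le> n \<Longrightarrow> block_index gs a = block_index gs (a + Suc d)
      \<Longrightarrow> u a < u (a + Suc d)" for d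
  proof (induction d)
    case 0
    then have "a < n" by simp
    then show ?case using descents_in_SetC_step[OF pos n u D ab(1)] 0 by simp
  next
    case (Suc d)
    define c where "c = a + Suc d"
    have sc: "Suc c = a + Suc (Suc d)" by (simp add: c_def)
    have ac: "a \<le> c" "c \<le> a + Suc (Suc d)" by (simp_all add: c_def)
    have m1: "block_index gs a \<le> block_index gs c" using ac(1) by (rule block_index_mono)
    have m2: "block_index gs c \<le> block_index gs (a + Suc (Suc d))" using ac(2) by (rule block_index_mono)
    have bc: "block_index gs a = block_index gs c" using m1 m2 Suc.prems(2) by simp
    have bc2: "block_index gs c = block_index gs (Suc c)" using bc Suc.prems(2) sc by simp
    have cn: "c < n" using Suc.prems(1) sc by simp
    have "u a < u c" using Suc.IH cn bc by (simp add: c_def)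
    also have "u c < u (Suc c)"
      using descents_in_SetC_step[OF pos n u D _ cn bc2] ab(1) by (simp add: c_def)
    finally show ?case using sc by simp
  qed
  define d where "d = b - a - 1"
  have d: "b = a + Suc d" using ab(2) by (simp add: d_def)
  show ?thesis using main[of d] d ab by simp
qed

lemma inv_in_block_shuffles:
  assumes pos: "\<forall>a\<in>set gs. 0 < a" and n: "n = sum_list gs"
    and u: "u permutes {1..n}" and D: "Des n u \<subseteq> SetC gs"
  shows "inv u \<in> block_shuffles gs n"
  unfolding block_shuffles_def
proof (intro CollectI conjI allI impI)
  show "inv u permutes {1..n}" using permutes_inv[OF u] .
  fix x y assume xy: "1 \<le> x" "x < y" "y \<le> n" "block_index gs (inv u x) = block_index gs (inv u y)"
  have "x \<in> {1..n}" "y \<in> {1..n}" using xy by simp_all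
  then have ix: "inv u x \<in> {1..n}" "inv u y \<in> {1..n}"
    by (simp_all only: permutes_in_image[OF permutes_inv[OF u]])
  have ne: "inv u x \<noteq> inv u y" using inj_eq[OF permutes_inj[OF permutes_inv[OF u]]] xy by simp
  show "inv u x < inv u y"
  proof (rule ccontr)
    assume "\<not> inv u x < inv u y"
    then have "inv u y < inv u x" using ne by simp
    then have "u (inv u y) < u (inv u x)"
      using descents_in_SetC_within_block[OF pos n u D, of "inv u y" "inv u x"] ix xy by auto
    then have "y < x" by (simp add: permutes_inverses(1)[OF u])
    then show False using xy by simp
  qed
qed

lemma inv_block_shuffle_descents:
  assumes pos: "\<forall>a\<in>set gs. 0 < a" and n: "n = sum_list gs" and v: "v \<in> block_shuffles gs n"
  shows "inv v permutes {1..n} \<and> Des n (inv v) \<subseteq> SetC gs"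
proof
  have vp: "v permutes {1..n}" using v by (simp add: block_shuffles_def)
  show "inv v permutes {1..n}" using permutes_inv[OF vp] .
  show "Des n (inv v) \<subseteq> SetC gs"
  proof
    fix i assume "i \<in> Des n (inv v)"
    then have i: "1 \<le> i" "i < n" "inv v i > inv v (i + 1)" by (auto simp: Des_def)
    show "i \<in> SetC gs"
    proof (rule ccontr)
      assume "i \<notin> SetC gs"
      then have b: "block_index gs i = block_index gs (Suc i)" using SetC_iff_block_index_change[OF pos i(1)] i n by simp
      define x where "x = inv v (Suc i)"
      define y where "y = inv v i"
      have "Suc i \<in> {1..n}" "i \<in> {1..n}" using i by simp_all
      then have xy: "x \<in> {1..n}" "y \<in> {1..n}" unfolding x_def y_def
        by (simp_all only: permutes_in_image[OF permutes_inv[OF vp]])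
      have vx: "v x = Suc i" "v y = i" by (auto simp: x_def y_def permutes_inverses(1)[OF vp])
      have xly: "x < y" using i by (simp add: x_def y_def)
      have Q: "\<forall>x y. 1 \<le> x \<longrightarrow> x < y \<longrightarrow> y \<le> n
          \<longrightarrow> block_index gs (v x) = block_index gs (v y) \<longrightarrow> v x < v y"
        using v by (simp add: block_shuffles_def)
      have "block_index gs (v x) = block_index gs (v y)" using vx b by simp
      then have "v x < v y" using Q xy xly by auto
      then show False using vx by simp
    qed
  qed
qed

lemma sum_descents_in_SetC_eq_block_shuffles:
  assumes pos: "\<forall>a\<in>set gs. 0 < a" and n: "n = sum_list gs"
  shows "(\<Sum>u\<in>{u. u permutes {1..n} \<and> Des n u \<subseteq> SetC gs}. F (inv u))
    = (\<Sum>v\<in>block_shuffles gs n. F v)"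
proof (rule sum.reindex_bij_witness[where i = inv and j = inv])
  fix u assume "u \<in> {u. u permutes {1..n} \<and> Des n u \<subseteq> SetC gs}"
  then have u: "u permutes {1..n}" "Des n u \<subseteq> SetC gs" by auto
  show "inv (inv u) = u" using permutes_inv_inv[OF u(1)] .
  show "inv u \<in> block_shuffles gs n" using inv_in_block_shuffles[OF pos n u] .
next
  fix v assume v: "v \<in> block_shuffles gs n"
  have vp: "v permutes {1..n}" using v by (simp add: block_shuffles_def)
  show "inv (inv v) = v" using permutes_inv_inv[OF vp] .
  show "inv v \<in> {u. u permutes {1..n} \<and> Des n u \<subseteq> SetC gs}"
    using inv_block_shuffle_descents[OF pos n v] by simp
qed simp

text \<open>\<open>shuffle_code gs n v\<close> records, for each position of \<open>act w v\<close>, the chunk of \<open>w\<close> that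
its letter comes from; \<open>code_shuffle\<close> is the inverse construction.\<close>

definition shuffle_code :: "nat list \<Rightarrow> nat \<Rightarrow> (nat \<Rightarrow> nat) \<Rightarrow> nat list" where
  "shuffle_code gs n v = map (\<lambda>j. block_index gs (v (Suc j))) [0..<n]"

definition code_shuffle :: "nat list \<Rightarrow> nat \<Rightarrow> nat list \<Rightarrow> nat \<Rightarrow> nat" where
  "code_shuffle gs n cs = (\<lambda>x. if 1 \<le> x \<and> x \<le> n
     then block_offset gs (cs!(x-1)) + count_list (take (x-1) cs) (cs!(x-1)) + 1 else x)"

lemma count_list_take_shuffle_code:
  assumes "j \<le> n"
  shows "count_list (take j (shuffle_code gs n v)) c = card {y\<in>{1..j}. block_index gs (v y) = c}"
proof -
  have "count_list (take j (shuffle_code gs n v)) c = card {i. i < j \<and> block_index gs (v (Suc i)) = c}"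
    using assms unfolding count_list_eq_length_filter length_filter_conv_card
    by (intro arg_cong[where f = card]) (auto simp: shuffle_code_def)
  also have "\<dots> = card (Suc ` {i. i < j \<and> block_index gs (v (Suc i)) = c})"
    by (simp add: card_image)
  also have "Suc ` {i. i < j \<and> block_index gs (v (Suc i)) = c} = {y\<in>{1..j}. block_index gs (v y) = c}"
  proof
    show "{y\<in>{1..j}. block_index gs (v y) = c} \<subseteq> Suc ` {i. i < j \<and> block_index gs (v (Suc i)) = c}"
    proof
      fix y assume "y \<in> {y\<in>{1..j}. block_index gs (v y) = c}"
      then have "y = Suc (y - 1)" "y - 1 \<in> {i. i < j \<and> block_index gs (v (Suc i)) = c}" by auto
      then show "y \<in> Suc ` {i. i < j \<and> block_index gs (v (Suc i)) = c}" by (metis imageI)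
    qed
  qed auto
  finally show ?thesis .
qed

lemma block_shuffle_image_earlier:
  assumes n: "n = sum_list gs" and v: "v \<in> block_shuffles gs n" and x: "1 \<le> x" "x \<le> n"
  defines "c \<equiv> block_index gs (v x)"
  shows "v ` {y\<in>{1..x-1}. block_index gs (v y) = c} = {block_offset gs c + 1..<v x}"
proof -
  have vp: "v permutes {1..n}" using v by (simp add: block_shuffles_def)
  have Q: "\<And>x y. 1 \<le> x \<Longrightarrow> x < y \<Longrightarrow> y \<le> n
      \<Longrightarrow> block_index gs (v x) = block_index gs (v y) \<Longrightarrow> v x < v y"
    using v by (simp add: block_shuffles_def)
  have vx: "1 \<le> v x" "v x \<le> n" using permutes_atLeastAtMost_bounds[OF vp x] by auto
  have P: "c < length gs" "block_offset gs c < v x" "v x \<le> block_offset gs c + gs ! c"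
    using block_index_bounds[of "v x" gs] vx n by (auto simp: c_def)
  show ?thesis
  proof
    show "v ` {y\<in>{1..x-1}. block_index gs (v y) = c} \<subseteq> {block_offset gs c + 1..<v x}"
    proof
      fix z assume "z \<in> v ` {y\<in>{1..x-1}. block_index gs (v y) = c}"
      then obtain y where y: "1 \<le> y" "y < x" "block_index gs (v y) = c" and z: "z = v y"
        by auto
      have "1 \<le> v y" "v y \<le> n" using permutes_atLeastAtMost_bounds[OF vp y(1)] y x by auto
      then have "block_offset gs c < v y" using block_index_bounds[of "v y" gs] n y(3) by auto
      moreover have "v y < v x" using Q[OF y(1,2) x(2)] y(3) c_def by simp
      ultimately show "z \<in> {block_offset gs c + 1..<v x}" using z by simp
    qed
    show "{block_offset gs c + 1..<v x} \<subseteq> v ` {y\<in>{1..x-1}. block_index gs (v y) = c}"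
    proof
      fix z assume z: "z \<in> {block_offset gs c + 1..<v x}"
      have bz: "block_index gs z = c" using z P by (intro block_index_eqI) auto
      define y where "y = inv v z"
      have vy: "v y = z" by (simp add: y_def permutes_inverses(1)[OF vp])
      have "z \<in> {1..n}" using z vx by auto
      then have y: "1 \<le> y" "y \<le> n"
        using permutes_atLeastAtMost_bounds[OF permutes_inv[OF vp]] by (auto simp: y_def)
      have "\<not> x \<le> y"
      proof
        assume "x \<le> y"
        moreover have "y \<noteq> x" using vy z by auto
        ultimately have "v x < v y" using Q[OF x(1) _ y(2)] bz vy c_def by simp
        then show False using vy z by simp
      qed
      then have "y \<in> {y\<in>{1..x-1}. block_index gs (v y) = c}" using y bz vy by simp
      then show "z \<in> v ` {y\<in>{1..x-1}. block_index gs (v y) = c}" using vy by (metis imageI)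
    qed
  qed
qed

text \<open>Since \<open>v\<close> lists every block in increasing order, \<open>v x\<close> is determined by its block and
by the number of earlier positions that \<open>v\<close> maps into the same block.\<close>

lemma block_shuffle_value:
  assumes n: "n = sum_list gs" and v: "v \<in> block_shuffles gs n" and x: "1 \<le> x" "x \<le> n"
  shows "v x = block_offset gs (block_index gs (v x)) +
    count_list (take (x-1) (shuffle_code gs n v)) (block_index gs (v x)) + 1"
proof -
  define c where "c = block_index gs (v x)"
  have vp: "v permutes {1..n}" using v by (simp add: block_shuffles_def)
  have "block_offset gs c < v x"
    using block_index_bounds[of "v x" gs] permutes_atLeastAtMost_bounds[OF vp x] n by (auto simp: c_def)
  moreover have "count_list (take (x-1) (shuffle_code gs n v)) c =
      card (v ` {y\<in>{1..x-1}. block_index gs (v y) = c})"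
    using x count_list_take_shuffle_code[of "x - 1" n gs v c] card_image[OF permutes_inj_on[OF vp]]
    by simp
  ultimately show ?thesis
    unfolding block_shuffle_image_earlier[OF n v x, folded c_def] by (simp add: c_def)
qed

lemma permutes_image_block_preimage:
  assumes n: "n = sum_list gs" and vp: "v permutes {1..n}" and c: "c < length gs"
  shows "v ` {y\<in>{1..n}. block_index gs (v y) = c} = {block_offset gs c + 1..block_offset gs c + gs!c}"
proof
  show "v ` {y\<in>{1..n}. block_index gs (v y) = c} \<subseteq> {block_offset gs c + 1..block_offset gs c + gs!c}"
  proof
    fix z assume "z \<in> v ` {y\<in>{1..n}. block_index gs (v y) = c}"
    then obtain y where y: "1 \<le> y" "y \<le> n" "block_index gs (v y) = c" and z: "z = v y"
      by auto
    have "1 \<le> v y" "v y \<le> n" using permutes_atLeastAtMost_bounds[OF vp y(1,2)] by auto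
    then show "z \<in> {block_offset gs c + 1..block_offset gs c + gs!c}"
      using block_index_bounds[of "v y" gs] n y(3) z by auto
  qed
  show "{block_offset gs c + 1..block_offset gs c + gs!c} \<subseteq> v ` {y\<in>{1..n}. block_index gs (v y) = c}"
  proof
    fix z assume z: "z \<in> {block_offset gs c + 1..block_offset gs c + gs!c}"
    have "z \<in> {1..n}" using z block_offset_add_le_sum_list[OF c] n by auto
    moreover have "block_index gs z = c" using z c by (intro block_index_eqI) auto
    ultimately have "inv v z \<in> {y\<in>{1..n}. block_index gs (v y) = c}" "v (inv v z) = z"
      using permutes_atLeastAtMost_bounds[OF permutes_inv[OF vp]]
      by (auto simp: permutes_inverses(1)[OF vp])
    then show "z \<in> v ` {y\<in>{1..n}. block_index gs (v y) = c}" by (metis imageI)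
  qed
qed

lemma shuffle_code_in_shuffle_codes:
  assumes n: "n = sum_list gs" and v: "v \<in> block_shuffles gs n" and w: "length w = n"
  shows "shuffle_code gs n v \<in> shuffle_codes (chunks gs w)"
  unfolding shuffle_codes_def
proof (intro CollectI conjI allI impI)
  have vp: "v permutes {1..n}" using v by (simp add: block_shuffles_def)
  show "set (shuffle_code gs n v) \<subseteq> {..<length (chunks gs w)}"
  proof
    fix c assume "c \<in> set (shuffle_code gs n v)"
    then obtain j where j: "j < n" "c = block_index gs (v (Suc j))" by (auto simp: shuffle_code_def)
    have "1 \<le> v (Suc j)" "v (Suc j) \<le> n" using permutes_atLeastAtMost_bounds[OF vp, of "Suc j"] j by auto
    then show "c \<in> {..<length (chunks gs w)}" using block_index_bounds[of "v (Suc j)" gs] n j by auto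
  qed
  fix c assume "c < length (chunks gs w)"
  then have c: "c < length gs" by simp
  define B where "B = {y\<in>{1..n}. block_index gs (v y) = c}"
  have img: "v ` B = {block_offset gs c + 1..block_offset gs c + gs!c}"
    unfolding B_def by (rule permutes_image_block_preimage[OF n vp c])
  have "card B = card (v ` B)" by (rule card_image[OF permutes_inj_on[OF vp], symmetric])
  then have "card B = gs ! c" unfolding img by simp
  moreover have "count_list (shuffle_code gs n v) c = card B"
    using count_list_take_shuffle_code[of n n gs v c] by (simp add: B_def shuffle_code_def)
  moreover have "length (chunks gs w ! c) = gs ! c" using length_nth_chunks[OF c] w n by simp
  ultimately show "count_list (shuffle_code gs n v) c = length (chunks gs w ! c)" by simp
qed

lemma code_shuffle_shuffle_code:
  assumes n: "n = sum_list gs" and v: "v \<in> block_shuffles gs n"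
  shows "code_shuffle gs n (shuffle_code gs n v) = v"
proof
  fix x
  have vp: "v permutes {1..n}" using v by (simp add: block_shuffles_def)
  show "code_shuffle gs n (shuffle_code gs n v) x = v x"
  proof (cases "1 \<le> x \<and> x \<le> n")
    case True
    then have "x - 1 < n" "Suc (x - 1) = x" by auto
    then have "shuffle_code gs n v ! (x - 1) = block_index gs (v x)" by (simp add: shuffle_code_def)
    then show ?thesis using block_shuffle_value[OF n v] True by (simp add: code_shuffle_def)
  next
    case False
    then have "x \<notin> {1..n}" by simp
    then have "v x = x" using permutes_not_in[OF vp] by simp
    moreover have "code_shuffle gs n (shuffle_code gs n v) x = x" unfolding code_shuffle_def by (simp only: if_not_P[OF False])
    ultimately show ?thesis by simp
  qed
qed

lemma length_shuffle_code_chunks: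
  assumes "cs \<in> shuffle_codes (chunks gs w)" "length w = sum_list gs"
  shows "length cs = sum_list gs"
proof -
  have "length cs = (\<Sum>k<length gs. length (chunks gs w ! k))" using length_shuffle_code[OF assms(1)] by simp
  also have "\<dots> = (\<Sum>k<length gs. gs ! k)"
    by (rule sum.cong) (auto simp: length_nth_chunks[OF _ assms(2)])
  also have "\<dots> = sum_list gs" by (simp add: sum_list_sum_nth atLeast0LessThan[symmetric])
  finally show ?thesis .
qed

lemma code_shuffle_props:
  assumes n: "n = sum_list gs" and cs: "cs \<in> shuffle_codes (chunks gs w)" and w: "length w = n"
    and x: "1 \<le> x" "x \<le> n"
  shows "block_index gs (code_shuffle gs n cs x) = cs ! (x - 1)
    \<and> 1 \<le> code_shuffle gs n cs x \<and> code_shuffle gs n cs x \<le> n"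
proof -
  have lcs: "length cs = n" using length_shuffle_code_chunks[OF cs] w n by simp
  define c where "c = cs ! (x - 1)"
  have xl: "x - 1 < length cs" using x lcs by simp
  have c: "c < length gs" using cs nth_mem[OF xl] by (auto simp: shuffle_codes_def c_def)
  have "count_list (take (x-1) cs) c < count_list (take (Suc (x - 1)) cs) c"
    using xl by (simp add: take_Suc_conv_app_nth c_def)
  also have "\<dots> \<le> count_list cs c" by (rule count_take_le)
  also have "\<dots> = gs ! c" using cs c length_nth_chunks[OF c] w n by (simp add: shuffle_codes_def)
  finally have lt: "count_list (take (x-1) cs) c < gs ! c" .
  have offc: "block_offset gs c + gs!c \<le> n" using block_offset_Suc[OF c] block_offset_le_sum_list[of gs "Suc c"] n by simp
  have v: "code_shuffle gs n cs x = block_offset gs c + count_list (take (x-1) cs) c + 1"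
    using x by (simp add: code_shuffle_def c_def)
  have "block_index gs (code_shuffle gs n cs x) = c" unfolding v using c lt by (intro block_index_eqI) auto
  then show ?thesis using v lt offc by (simp add: c_def)
qed

lemma shuffle_code_code_shuffle:
  assumes n: "n = sum_list gs" and cs: "cs \<in> shuffle_codes (chunks gs w)" and w: "length w = n"
  shows "shuffle_code gs n (code_shuffle gs n cs) = cs"
proof (rule nth_equalityI)
  show "length (shuffle_code gs n (code_shuffle gs n cs)) = length cs"
    using length_shuffle_code_chunks[OF cs] w n by (simp add: shuffle_code_def)
  fix j assume "j < length (shuffle_code gs n (code_shuffle gs n cs))"
  then have j: "j < n" by (simp add: shuffle_code_def)
  then show "shuffle_code gs n (code_shuffle gs n cs) ! j = cs ! j"
    using code_shuffle_props[OF n cs w, of "Suc j"] by (simp add: shuffle_code_def)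
qed

lemma code_shuffle_in_block_shuffles:
  assumes n: "n = sum_list gs" and cs: "cs \<in> shuffle_codes (chunks gs w)" and w: "length w = n"
  shows "code_shuffle gs n cs \<in> block_shuffles gs n"
proof -
  define f where "f = code_shuffle gs n cs"
  have lcs: "length cs = n" using length_shuffle_code_chunks[OF cs] w n by simp
  have f_props: "\<And>x. 1 \<le> x \<Longrightarrow> x \<le> n
      \<Longrightarrow> block_index gs (f x) = cs ! (x - 1) \<and> 1 \<le> f x \<and> f x \<le> n"
    unfolding f_def using code_shuffle_props[OF n cs w] by blast
  have increasing: "f x < f y" if xy: "1 \<le> x" "x < y" "y \<le> n" "block_index gs (f x) = block_index gs (f y)" for x y
  proof -
    have e: "cs ! (x - 1) = cs ! (y - 1)" using f_props[of x] f_props[of y] xy by simp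
    have "count_list (take (x-1) cs) (cs ! (x - 1)) < count_list (take (y-1) cs) (cs ! (x - 1))"
      using xy lcs by (intro count_list_take_strict_mono) auto
    then show ?thesis using xy e by (simp add: f_def code_shuffle_def)
  qed
  have "inj_on f {1..n}"
  proof (rule linorder_inj_onI)
    fix x y assume "x < y" "x \<in> {1..n}" "y \<in> {1..n}"
    then show "f x \<noteq> f y" using increasing[of x y] by auto
  qed auto
  moreover have "f ` {1..n} \<subseteq> {1..n}" using f_props by auto
  moreover have "\<And>x. x \<notin> {1..n} \<Longrightarrow> f x = x" by (auto simp: f_def code_shuffle_def)
  ultimately have "f permutes {1..n}" by (intro inj_imp_permutes) (auto simp: image_subset_iff)
  then show ?thesis using increasing by (simp add: block_shuffles_def f_def)
qed

lemma interleave_chunks_shuffle_code: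
  assumes n: "n = sum_list gs" and v: "v \<in> block_shuffles gs n" and w: "length w = n"
  shows "interleave (shuffle_code gs n v) (chunks gs w) = act w v"
proof (rule nth_equalityI)
  show "length (interleave (shuffle_code gs n v) (chunks gs w)) = length (act w v)"
    using w by (simp add: shuffle_code_def act_def)
  fix j assume "j < length (interleave (shuffle_code gs n v) (chunks gs w))"
  then have j: "j < n" by (simp add: shuffle_code_def)
  have vp: "v permutes {1..n}" using v by (simp add: block_shuffles_def)
  define c where "c = block_index gs (v (Suc j))"
  define k where "k = count_list (take j (shuffle_code gs n v)) c"
  have vj: "1 \<le> v (Suc j)" "v (Suc j) \<le> n" using permutes_atLeastAtMost_bounds[OF vp, of "Suc j"] j by auto
  have P: "c < length gs" "block_offset gs c < v (Suc j)" "v (Suc j) \<le> block_offset gs c + gs ! c"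
    using block_index_bounds[of "v (Suc j)" gs] vj n by (auto simp: c_def)
  have K: "v (Suc j) = block_offset gs c + k + 1" using block_shuffle_value[OF n v, of "Suc j"] j by (simp add: c_def k_def)
  have kl: "k < gs ! c" using K P by simp
  have "interleave (shuffle_code gs n v) (chunks gs w) ! j = chunks gs w ! c ! k"
    using j by (simp add: nth_interleave shuffle_code_def c_def k_def)
  also have "\<dots> = w ! (block_offset gs c + k)" using nth_nth_chunks[OF P(1) _ kl] w n by simp
  also have "\<dots> = act w v ! j" using j w K by (simp add: act_def del: upt_Suc)
  finally show "interleave (shuffle_code gs n v) (chunks gs w) ! j = act w v ! j" .
qed

lemma sum_block_shuffles_eq_shuffle_codes:
  assumes n: "n = sum_list gs" and w: "length w = n"
  shows "(\<Sum>v\<in>block_shuffles gs n. F (act w v))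
    = (\<Sum>cs\<in>shuffle_codes (chunks gs w). F (interleave cs (chunks gs w)))"
proof (rule sum.reindex_bij_witness[where i = "code_shuffle gs n" and j = "shuffle_code gs n"])
  fix v assume v: "v \<in> block_shuffles gs n"
  show "code_shuffle gs n (shuffle_code gs n v) = v" using code_shuffle_shuffle_code[OF n v] .
  show "shuffle_code gs n v \<in> shuffle_codes (chunks gs w)" using shuffle_code_in_shuffle_codes[OF n v w] .
  show "F (interleave (shuffle_code gs n v) (chunks gs w)) = F (act w v)" using interleave_chunks_shuffle_code[OF n v w] by simp
next
  fix cs assume cs: "cs \<in> shuffle_codes (chunks gs w)"
  show "shuffle_code gs n (code_shuffle gs n cs) = cs" using shuffle_code_code_shuffle[OF n cs w] .
  show "code_shuffle gs n cs \<in> block_shuffles gs n" using code_shuffle_in_block_shuffles[OF n cs w] .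
qed

section \<open>The action of \<open>B\<^sub>I\<close>\<close>

lemma ract_apply:
  assumes u: "u permutes {1..n}" and w': "length w' = n" "set w' \<subseteq> {1..n}"
  shows "ract n f u w' = f (act w' (inv u))"
proof -
  define W where "W = {w. length w = length w' \<and> set w \<subseteq> {1..n}}"
  define w0 where "w0 = act w' (inv u)"
  have fin: "finite W" unfolding W_def using finite_lists_length_eq[of "{1..n}" "length w'"]
    by (simp add: conj_commute)
  have iu: "inv u permutes {1..n}" using permutes_inv[OF u] .
  have w0W: "w0 \<in> W" using set_act[OF w'(1) iu] w' by (auto simp: W_def w0_def)
  have eq: "(act w u = w') = (w = w0)" if "w \<in> W" for w
  proof
    assume "act w u = w'"
    then have "w0 = act w (u \<circ> inv u)" unfolding w0_def using act_comp[of w n "inv u" u] that iu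
      by (simp add: W_def w')
    then show "w = w0" by (simp add: permutes_inv_o(1)[OF u] act_id)
  next
    assume "w = w0"
    then have "act w u = act w' (inv u \<circ> u)" unfolding w0_def using act_comp[OF w'(1) u] by simp
    then show "act w u = w'" by (simp add: permutes_inv_o(2)[OF u] act_id)
  qed
  have "ract n f u w' = (\<Sum>w\<in>W. if w = w0 then f w else 0)"
    unfolding ract_def W_def[symmetric] by (rule sum.cong[OF refl]) (simp add: eq)
  also have "\<dots> = f w0" using sum.delta[OF fin, of w0 f] w0W by simp
  finally show ?thesis by (simp add: w0_def)
qed

lemma ract_eq_0_length:
  assumes "homogeneous n f" "length w' \<noteq> n"
  shows "ract n f u w' = 0"
  unfolding ract_def by (rule sum.neutral) (use assms in \<open>auto simp: homogeneousD\<close>)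

lemma ract_eq_0_letters:
  assumes u: "u permutes {1..n}" and w': "length w' = n" "\<not> set w' \<subseteq> {1..n}"
  shows "ract n f u w' = 0"
  unfolding ract_def
proof (rule sum.neutral, rule ballI)
  fix w assume w: "w \<in> {w. length w = length w' \<and> set w \<subseteq> {1..n}}"
  have "act w u \<noteq> w'"
  proof
    assume "act w u = w'"
    then have "set w' \<subseteq> set w" using set_act[of w n u] w w' u by auto
    then show False using w w' by auto
  qed
  then show "(if act w u = w' then f w else 0) = 0" by simp
qed

lemma homogeneous_ractB:
  assumes "homogeneous n f"
  shows "homogeneous n (ractB n f I)"
  unfolding ractB_def
proof (rule homogeneous_sum)
  fix u
  show "homogeneous n (ract n f u)"
    unfolding homogeneous_def using ract_eq_0_length[OF assms] by blast
qed

lemma letters_in_ractB: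
  assumes "homogeneous n f"
  shows "letters_in {1..n} (ractB n f I)"
  unfolding ractB_def
proof (rule letters_in_sum)
  fix u assume "u \<in> {u. u permutes {1..n} \<and> Des n u \<subseteq> I}"
  then have u: "u permutes {1..n}" by simp
  show "letters_in {1..n} (ract n f u)"
    unfolding letters_in_def using ract_eq_0_length[OF assms] ract_eq_0_letters[OF u] by blast
qed

lemma ractB_SetC_apply:
  assumes \<gamma>: "composition n \<gamma>" and w: "length w = n" "set w \<subseteq> {1..n}"
  shows "ractB n f (SetC \<gamma>) w = shuffle_pairing f (chunks \<gamma> w)"
proof -
  have pos: "\<forall>a\<in>set \<gamma>. 0 < a" and n: "n = sum_list \<gamma>"
    using \<gamma> by (auto simp: composition_def)
  have "ractB n f (SetC \<gamma>) w = (\<Sum>u | u permutes {1..n} \<and> Des n u \<subseteq> SetC \<gamma>. f (act w (inv u)))"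
    unfolding ractB_def sum_fun_apply by (rule sum.cong[OF refl]) (use ract_apply w in blast)
  also have "\<dots> = (\<Sum>v\<in>block_shuffles \<gamma> n. f (act w v))"
    by (rule sum_descents_in_SetC_eq_block_shuffles[OF pos n])
  also have "\<dots> = shuffle_pairing f (chunks \<gamma> w)"
    unfolding shuffle_pairing_def by (rule sum_block_shuffles_eq_shuffle_codes[OF n w(1)])
  finally show ?thesis .
qed

section \<open>Products of the \<open>V\<^sup>S\<close> over permuted blocks\<close>

lemma
  assumes "composition n \<beta>" "i \<in> {1..length \<beta>}"
  shows primitive_Vset_block: "primitive (Vset (block \<beta> i) :: 'k::comm_ring_1 fa)"
    and homogeneous_Vset_block: "homogeneous (\<beta> ! (i - 1)) (Vset (block \<beta> i) :: 'k fa)"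
    and letters_in_Vset_block: "letters_in {1..n} (Vset (block \<beta> i) :: 'k fa)"
proof -
  have "0 < \<beta> ! (i - 1)" using assms by (auto simp: composition_def)
  then have fin: "finite (block \<beta> i)" and ne: "block \<beta> i \<noteq> {}"
    using card_block[OF assms(2)] by (auto simp: block_def)
  show "primitive (Vset (block \<beta> i) :: 'k fa)" by (rule primitive_Vset[OF fin ne])
  show "homogeneous (\<beta> ! (i - 1)) (Vset (block \<beta> i) :: 'k fa)"
    using homogeneous_Vset[OF fin ne] card_block[OF assms(2)] by simp
  show "letters_in {1..n} (Vset (block \<beta> i) :: 'k fa)"
    using letters_in_mono[OF letters_in_Vset[OF fin ne] block_subset] assms(1)
    by (simp add: composition_def)
qed

definition Vcomp_permuted :: "nat list \<Rightarrow> (nat \<Rightarrow> nat) \<Rightarrow> 'k::comm_ring_1 fa" where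
  "Vcomp_permuted \<beta> \<chi> = fprod (map (\<lambda>i. Vset (block \<beta> (\<chi> i))) [1..<length \<beta> + 1])"

definition block_matchings :: "nat list \<Rightarrow> nat list \<Rightarrow> (nat \<Rightarrow> nat) set" where
  "block_matchings \<beta> \<gamma> =
     {\<chi>. \<chi> permutes {1..length \<beta>} \<and> (\<forall>i\<in>{1..length \<beta>}. \<beta> ! (\<chi> i - 1) = \<gamma> ! (i - 1))}"

lemma Vcomp_eq_Vcomp_permuted_id: "Vcomp \<beta> = Vcomp_permuted \<beta> id"
  by (simp add: Vcomp_def Vcomp_permuted_def)

lemma id_in_block_matchings: "id \<in> block_matchings \<beta> \<beta>"
  by (simp add: block_matchings_def permutes_id)

lemma letters_in_Vcomp_permuted:
  assumes "composition n \<beta>" "\<chi> permutes {1..length \<beta>}"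
  shows "letters_in {1..n} (Vcomp_permuted \<beta> \<chi> :: 'k::comm_ring_1 fa)"
  unfolding Vcomp_permuted_def
proof (rule letters_in_fprod, rule ballI)
  fix a assume "a \<in> set (map (\<lambda>i. Vset (block \<beta> (\<chi> i)) :: 'k fa) [1..<length \<beta> + 1])"
  then obtain i where i: "i \<in> {1..<length \<beta> + 1}" "a = Vset (block \<beta> (\<chi> i))"
    by (auto simp del: upt_Suc)
  then have "i \<in> {1..length \<beta>}" by auto
  then have "\<chi> i \<in> {1..length \<beta>}" using permutes_in_image[OF assms(2)] by simp
  then show "letters_in {1..n} a" using letters_in_Vset_block[OF assms(1)] i(2) by simp
qed

lemma
  assumes \<beta>: "composition n \<beta>" and \<gamma>: "composition n \<gamma>" and len: "length \<beta> = length \<gamma>"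
    and \<chi>: "\<chi> \<in> block_matchings \<beta> \<gamma>"
  shows homogeneous_Vcomp_permuted: "homogeneous n (Vcomp_permuted \<beta> \<chi> :: 'k::comm_ring_1 fa)"
    and Vcomp_permuted_apply: "length w = n \<Longrightarrow> (Vcomp_permuted \<beta> \<chi> :: 'k fa) w =
      (\<Prod>m<length \<beta>. Vset (block \<beta> (\<chi> (Suc m))) (chunks \<gamma> w ! m))"
proof -
  define L where "L = map (\<lambda>i. Vset (block \<beta> (\<chi> i)) :: 'k fa) [1..<length \<beta> + 1]"
  have n: "sum_list \<gamma> = n" using \<gamma> by (simp add: composition_def)
  have L: "L ! k = Vset (block \<beta> (\<chi> (Suc k)))" if "k < length \<beta>" for k
    using that by (simp add: L_def nth_map_upt del: upt_Suc)
  have \<chi>p: "\<chi> permutes {1..length \<beta>}"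
    and match: "\<forall>i\<in>{1..length \<beta>}. \<beta> ! (\<chi> i - 1) = \<gamma> ! (i - 1)"
    using \<chi> by (auto simp: block_matchings_def)
  have "homogeneous (\<gamma> ! k) (L ! k)" if "k < length L" for k
  proof -
    have k: "k < length \<beta>" "Suc k \<in> {1..length \<beta>}" using that by (auto simp: L_def simp del: upt_Suc)
    then have "\<chi> (Suc k) \<in> {1..length \<beta>}" using permutes_in_image[OF \<chi>p] by simp
    moreover have "\<beta> ! (\<chi> (Suc k) - 1) = \<gamma> ! (Suc k - 1)" by (rule bspec[OF match k(2)])
    ultimately show ?thesis using homogeneous_Vset_block[OF \<beta>, of "\<chi> (Suc k)"] L[OF k(1)] by simp
  qed
  then have hom: "\<forall>k<length L. homogeneous (\<gamma> ! k) (L ! k)" by blast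
  have lenL: "length \<gamma> = length L" using len by (simp add: L_def del: upt_Suc)
  show "homogeneous n (Vcomp_permuted \<beta> \<chi> :: 'k fa)"
    using homogeneous_fprod[OF lenL hom] n by (simp add: Vcomp_permuted_def L_def)
  assume "length w = n"
  then have "fprod L w = (\<Prod>k<length L. (L ! k) (chunks \<gamma> w ! k))"
    using n by (intro fprod_homogeneous_apply[OF lenL hom]) simp
  also have "\<dots> = (\<Prod>m<length \<beta>. Vset (block \<beta> (\<chi> (Suc m))) (chunks \<gamma> w ! m))"
    using lenL len by (intro prod.cong) (simp_all add: L)
  finally show "(Vcomp_permuted \<beta> \<chi> :: 'k fa) w =
      (\<Prod>m<length \<beta>. Vset (block \<beta> (\<chi> (Suc m))) (chunks \<gamma> w ! m))"
    unfolding Vcomp_permuted_def L_def .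
qed

lemma sum_permutes_Suc_shift:
  "(\<Sum>\<tau> | \<tau> permutes {..<p}. g (Suc \<circ> \<tau>)) = (\<Sum>\<chi> | \<chi> permutes {1..p}. g (\<chi> \<circ> Suc))"
proof -
  have bij: "bij_betw Suc {..<p} {1..p}"
    by (simp add: bij_betw_def lessThan_atLeast0 atLeastLessThanSuc_atLeastAtMost)
  define sh where "sh = (\<lambda>\<tau> x. if x \<in> {1..p} then Suc (\<tau> (inv_into {..<p} Suc x)) else x)"
  have sh: "sh \<tau> \<circ> Suc = Suc \<circ> \<tau>" if "\<tau> permutes {..<p}" for \<tau>
  proof
    fix m
    show "(sh \<tau> \<circ> Suc) m = (Suc \<circ> \<tau>) m"
      using permutes_not_in[OF that, of m] by (cases "m < p") (auto simp: sh_def inv_into_f_f)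
  qed
  have "(\<Sum>\<chi> | \<chi> permutes {1..p}. g (\<chi> \<circ> Suc)) = (\<Sum>\<tau> | \<tau> permutes {..<p}. g (sh \<tau> \<circ> Suc))"
    using sum.reindex_bij_betw[OF bij_betw_permutations[OF bij], of "\<lambda>\<chi>. g (\<chi> \<circ> Suc)"]
    by (simp add: sh_def)
  also have "\<dots> = (\<Sum>\<tau> | \<tau> permutes {..<p}. g (Suc \<circ> \<tau>))"
    by (intro sum.cong refl) (simp add: sh)
  finally show ?thesis by simp
qed

lemma prod_Vset_block_eq_0:
  assumes \<beta>: "composition n \<beta>" and \<chi>: "\<chi> permutes {1..length \<beta>}"
    and i: "i \<in> {1..length \<beta>}" "\<beta> ! (\<chi> i - 1) \<noteq> \<gamma> ! (i - 1)"
    and len: "\<And>m. m < length \<beta> \<Longrightarrow> length (xs ! m) = \<gamma> ! m"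
  shows "(\<Prod>m<length \<beta>. (Vset (block \<beta> (\<chi> (Suc m))) :: 'k::comm_ring_1 fa) (xs ! m)) = 0"
proof (rule prod_zero)
  have "\<chi> i \<in> {1..length \<beta>}" using permutes_in_image[OF \<chi>] i(1) by simp
  then have "homogeneous (\<beta> ! (\<chi> i - 1)) (Vset (block \<beta> (\<chi> i)) :: 'k fa)"
    by (rule homogeneous_Vset_block[OF \<beta>])
  moreover have "length (xs ! (i - 1)) = \<gamma> ! (i - 1)" using i(1) by (intro len) auto
  ultimately have "(Vset (block \<beta> (\<chi> (Suc (i - 1)))) :: 'k fa) (xs ! (i - 1)) = 0"
    using i homogeneousD by fastforce
  then show "\<exists>m\<in>{..<length \<beta>}. (Vset (block \<beta> (\<chi> (Suc m))) :: 'k fa) (xs ! m) = 0"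
    using i(1) by (intro bexI[of _ "i - 1"]) auto
qed simp

lemma shuffle_pairing_Vcomp:
  assumes \<beta>: "composition n \<beta>" and len: "length xs = length \<beta>"
    and ne: "\<forall>m<length xs. xs ! m \<noteq> []"
  shows "shuffle_pairing (Vcomp \<beta> :: 'k::comm_ring_1 fa) xs =
    (\<Sum>\<tau> | \<tau> permutes {..<length \<beta>}. \<Prod>m<length \<beta>. Vset (block \<beta> (Suc (\<tau> m))) (xs ! m))"
proof -
  define Ps where "Ps = map (\<lambda>i. Vset (block \<beta> i) :: 'k fa) [1..<length \<beta> + 1]"
  have "\<forall>P\<in>set Ps. primitive P"
    using primitive_Vset_block[OF \<beta>] by (auto simp: Ps_def)
  then have "shuffle_pairing (Vcomp \<beta> :: 'k fa) xs =
      (\<Sum>\<tau> | \<tau> permutes {..<length \<beta>}. \<Prod>m<length \<beta>. (Ps ! \<tau> m) (xs ! m))"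
    using shuffle_pairing_fprod_permutes[of Ps xs] len ne
    by (simp add: Vcomp_def Ps_def del: upt_Suc)
  also have "\<dots> = (\<Sum>\<tau> | \<tau> permutes {..<length \<beta>}. \<Prod>m<length \<beta>. Vset (block \<beta> (Suc (\<tau> m))) (xs ! m))"
  proof (intro sum.cong refl prod.cong)
    fix \<tau> m assume "\<tau> \<in> {\<tau>. \<tau> permutes {..<length \<beta>}}" "m \<in> {..<length \<beta>}"
    then have "\<tau> m < length \<beta>" using permutes_in_image[of \<tau> "{..<length \<beta>}" m] by simp
    then show "(Ps ! \<tau> m) (xs ! m) = Vset (block \<beta> (Suc (\<tau> m))) (xs ! m)"
      by (simp add: Ps_def nth_map_upt del: upt_Suc)
  qed
  finally show ?thesis .
qed

lemma ractB_Vcomp_apply: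
  assumes \<beta>: "composition n \<beta>" and \<gamma>: "composition n \<gamma>" and len: "length \<beta> = length \<gamma>"
    and w: "length w = n" "set w \<subseteq> {1..n}"
  shows "ractB n (Vcomp \<beta> :: 'k::comm_ring_1 fa) (SetC \<gamma>) w =
    (\<Sum>\<chi>\<in>block_matchings \<beta> \<gamma>. \<Prod>m<length \<beta>. Vset (block \<beta> (\<chi> (Suc m))) (chunks \<gamma> w ! m))"
proof -
  define p where "p = length \<beta>"
  define xs where "xs = chunks \<gamma> w"
  define G where "G \<chi> = (\<Prod>m<p. (Vset (block \<beta> (\<chi> m)) :: 'k fa) (xs ! m))" for \<chi>
  have lxs: "length xs = p" using len by (simp add: xs_def p_def)
  have lxs_m: "length (xs ! m) = \<gamma> ! m" if "m < p" for m
    using length_nth_chunks[of m \<gamma> w] that len w \<gamma> by (simp add: xs_def p_def composition_def)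
  have ne: "\<forall>m<length xs. xs ! m \<noteq> []"
  proof (intro allI impI)
    fix m assume "m < length xs"
    then have "\<gamma> ! m \<in> set \<gamma>" "length (xs ! m) = \<gamma> ! m" using lxs lxs_m len by (auto simp: p_def)
    then show "xs ! m \<noteq> []" using \<gamma> by (auto simp: composition_def)
  qed
  have "ractB n (Vcomp \<beta>) (SetC \<gamma>) w = (\<Sum>\<tau> | \<tau> permutes {..<p}. G (Suc \<circ> \<tau>))"
    using shuffle_pairing_Vcomp[OF \<beta> _ ne] lxs
    by (simp add: ractB_SetC_apply[OF \<gamma> w] G_def xs_def p_def)
  also have "\<dots> = (\<Sum>\<chi> | \<chi> permutes {1..p}. G (\<chi> \<circ> Suc))"
    by (rule sum_permutes_Suc_shift)
  also have "\<dots> = (\<Sum>\<chi>\<in>block_matchings \<beta> \<gamma>. G (\<chi> \<circ> Suc))"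
  proof (rule sum.mono_neutral_right)
    show "\<forall>\<chi>\<in>{\<chi>. \<chi> permutes {1..p}} - block_matchings \<beta> \<gamma>. G (\<chi> \<circ> Suc) = 0"
    proof
      fix \<chi> assume "\<chi> \<in> {\<chi>. \<chi> permutes {1..p}} - block_matchings \<beta> \<gamma>"
      then obtain i where "\<chi> permutes {1..length \<beta>}" "i \<in> {1..length \<beta>}"
        "\<beta> ! (\<chi> i - 1) \<noteq> \<gamma> ! (i - 1)"
        by (auto simp: block_matchings_def p_def)
      then show "G (\<chi> \<circ> Suc) = 0"
        unfolding G_def p_def comp_def using lxs_m
        by (intro prod_Vset_block_eq_0[OF \<beta>]) (simp_all add: p_def)
    qed
  qed (auto simp: block_matchings_def p_def intro: finite_permutations)
  finally show ?thesis by (simp add: G_def xs_def p_def)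
qed

lemma homogeneous_Vcomp: "composition n \<beta> \<Longrightarrow> homogeneous n (Vcomp \<beta> :: 'k::comm_ring_1 fa)"
  unfolding Vcomp_eq_Vcomp_permuted_id
  using homogeneous_Vcomp_permuted[OF _ _ refl id_in_block_matchings] by blast

theorem lemma5p1:
  fixes n :: nat and \<beta> \<gamma> :: "nat list"
  assumes "composition n \<beta>" and "composition n \<gamma>" and "length \<beta> = length \<gamma>"
  shows "ractB n (Vcomp \<beta> :: 'k::comm_ring_1 fa) (SetC \<gamma>) =
    (\<Sum>\<chi>\<in>{\<chi>. \<chi> permutes {1..length \<beta>} \<and>
               (\<forall>i\<in>{1..length \<beta>}. \<beta> ! (\<chi> i - 1) = \<gamma> ! (i - 1))}.
        fprod (map (\<lambda>i. Vset (block \<beta> (\<chi> i))) [1..<length \<beta> + 1]))"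
proof -
  have "ractB n (Vcomp \<beta> :: 'k fa) (SetC \<gamma>) = (\<Sum>\<chi>\<in>block_matchings \<beta> \<gamma>. Vcomp_permuted \<beta> \<chi>)"
  proof (rule fa_eqI)
    show "homogeneous n (ractB n (Vcomp \<beta> :: 'k fa) (SetC \<gamma>))"
      "letters_in {1..n} (ractB n (Vcomp \<beta> :: 'k fa) (SetC \<gamma>))"
      using homogeneous_Vcomp[OF assms(1)] by (rule homogeneous_ractB, rule letters_in_ractB)
    show "homogeneous n (\<Sum>\<chi>\<in>block_matchings \<beta> \<gamma>. Vcomp_permuted \<beta> \<chi> :: 'k fa)"
      using assms by (intro homogeneous_sum homogeneous_Vcomp_permuted)
    show "letters_in {1..n} (\<Sum>\<chi>\<in>block_matchings \<beta> \<gamma>. Vcomp_permuted \<beta> \<chi> :: 'k fa)"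
      using assms(1) by (intro letters_in_sum letters_in_Vcomp_permuted) (auto simp: block_matchings_def)
    fix w assume "length w = n" "set w \<subseteq> {1..n}"
    then show "ractB n (Vcomp \<beta> :: 'k fa) (SetC \<gamma>) w = (\<Sum>\<chi>\<in>block_matchings \<beta> \<gamma>. Vcomp_permuted \<beta> \<chi>) w"
      using assms by (simp add: ractB_Vcomp_apply sum_fun_apply Vcomp_permuted_apply)
  qed
  then show ?thesis by (simp add: block_matchings_def Vcomp_permuted_def)
qed

end
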